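(* Let $q$ be a power of an odd prime with $q\equiv3\pmod4$, $d=4k+2$ with $k$ a positive integer, $S_0=\{x\in\mathbb F_q^d: x_1^2+\cdots+x_d^2=0\}$, and $A\subset S_0$ with $|A|\gg q^{d/2}$. Then $|\Delta(A)|\gg q$.
   Context: $\|x-y\|=\sum_{i}(x_i-y_i)^2$ and $\Delta(A)=\{\|x-y\|:x,y\in A\}$. $X\gg Y$ means $X\ge cY$ for a constant $c>0$ independent of $q$ (in the hypothesis, a sufficiently large such constant). *)

theory Defs
  imports "HOL-Algebra.Algebra" "HOL-Computational_Algebra.Primes"
begin

definition fvecs :: "('a, 'b) ring_scheme \<Rightarrow> nat \<Rightarrow> (nat \<Rightarrow> 'a) set" where
  "fvecs R d = ({..<d} \<rightarrow>\<^sub>E carrier R)"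

definition fsqdist :: "('a, 'b) ring_scheme \<Rightarrow> nat \<Rightarrow> (nat \<Rightarrow> 'a) \<Rightarrow> (nat \<Rightarrow> 'a) \<Rightarrow> 'a" where
  "fsqdist R d x y = finsum R (\<lambda>i. (x i \<ominus>\<^bsub>R\<^esub> y i) \<otimes>\<^bsub>R\<^esub> (x i \<ominus>\<^bsub>R\<^esub> y i)) {..<d}"

definition zero_sphere :: "('a, 'b) ring_scheme \<Rightarrow> nat \<Rightarrow> (nat \<Rightarrow> 'a) set" where
  "zero_sphere R d = {x \<in> fvecs R d. finsum R (\<lambda>i. x i \<otimes>\<^bsub>R\<^esub> x i) {..<d} = \<zero>\<^bsub>R\<^esub>}"

definition dist_set :: "('a, 'b) ring_scheme \<Rightarrow> nat \<Rightarrow> (nat \<Rightarrow> 'a) set \<Rightarrow> 'a set" where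
  "dist_set R d A = {fsqdist R d x y | x y. x \<in> A \<and> y \<in> A}"

end

theory Submission imports Defs begin

text \<open>
  For \<open>x, y\<close> on the zero sphere \<open>S\<^sub>0\<close> we have \<open>\<parallel>x - y\<parallel> = -2 x\<cdot>y\<close>, so for every \<open>x \<in> A\<close> the
  distance set has at least as many elements as \<open>{x\<cdot>y | y \<in> A}\<close>.  By Cauchy-Schwarz this number
  is at least \<open>|A|\<^sup>2 / E(x)\<close>, where \<open>E(x)\<close> counts the pairs \<open>(y, y') \<in> A\<^sup>2\<close> with \<open>x\<cdot>y = x\<cdot>y'\<close>.
  Summing \<open>E\<close> over all of \<open>S\<^sub>0\<close> only needs, for \<open>w \<noteq> 0\<close>, the bound \<open>q\<^sup>d\<^sup>-\<^sup>2\<close> on the number of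
  points of \<open>S\<^sub>0\<close> orthogonal to \<open>w\<close>; together with \<open>E(x) \<ge> |A|\<^sup>2/q\<close> on \<open>S\<^sub>0 - A\<close> this gives
  \<open>\<Sum>\<^sub>x\<^sub>\<in>\<^sub>A E(x) \<le> 3|A|\<^sup>3/q\<close> as soon as \<open>|A| \<ge> q\<^sup>d\<^sup>/\<^sup>2\<close>, so some \<open>x \<in> A\<close> sees at least \<open>q/3\<close> values.

  The orthogonality bound is an exact count.  The number of null vectors orthogonal to \<open>w\<close>
  is invariant under reflections, hence depends only on \<open>w\<cdot>w\<close> if \<open>w\<close> is anisotropic and is
  the same for all nonzero isotropic \<open>w\<close>; it is evaluated on explicit representatives via
  the recursion \<open>N\<^sub>n\<^sub>+\<^sub>2(c) = (q + 1) q\<^sup>n - q N\<^sub>n(c)\<close> for \<open>N\<^sub>n(c) = #{x. x\<cdot>x = c}\<close>.  The recursion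
  holds because \<open>-1\<close> is not a square when \<open>q \<equiv> 3 (mod 4)\<close>: then \<open>a\<^sup>2 + b\<^sup>2 = e\<close> has one
  solution for \<open>e = 0\<close> and \<open>q + 1\<close> solutions for every \<open>e \<noteq> 0\<close>.
\<close>

lemma sum_squared_le_card_sum_squares:
  fixes f :: "'c \<Rightarrow> real"
  assumes "finite T"
  shows "(\<Sum>t\<in>T. f t)^2 \<le> real (card T) * (\<Sum>t\<in>T. (f t)^2)"
proof -
  have "0 \<le> (\<Sum>s\<in>T. \<Sum>t\<in>T. (f s - f t)^2)" by (intro sum_nonneg) auto
  also have "\<dots> = 2 * real (card T) * (\<Sum>t\<in>T. (f t)^2) - 2 * (\<Sum>t\<in>T. f t)^2"
    by (simp add: power2_diff sum.distrib sum_subtractf sum_distrib_left sum_distrib_right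
        power2_eq_square sum.swap[of "\<lambda>s t. f t * f t"] algebra_simps)
  finally show ?thesis by simp
qed

lemma card_eq_sum_card_fibres:
  assumes "finite S" "finite T" "f ` S \<subseteq> T"
  shows "card S = (\<Sum>t\<in>T. card {x \<in> S. f x = t})"
  using sum.group[OF assms, of "\<lambda>_. 1::nat"] by simp

lemma card_squared_le_card_image_mult_collisions:
  assumes "finite A"
  shows "real (card A)^2 \<le> real (card (f ` A)) * (\<Sum>y\<in>A. \<Sum>y'\<in>A. if f y = f y' then 1 else 0)"
proof -
  define c where "c t = (\<Sum>y\<in>A. if f y = t then 1 else 0 :: real)" for t
  have "real (card A) = (\<Sum>t\<in>f ` A. c t)"
    using card_eq_sum_card_fibres[OF assms finite_imageI[OF assms] subset_refl, of f]
    by (simp add: c_def sum.If_cases[OF assms] Collect_conj_eq[symmetric] Int_def)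
  moreover have "(\<Sum>t\<in>f ` A. (c t)^2) = (\<Sum>y\<in>A. \<Sum>y'\<in>A. if f y = f y' then 1 else 0)"
  proof -
    have "(\<Sum>t\<in>f ` A. (c t)^2) = (\<Sum>t\<in>f ` A. \<Sum>y\<in>A. \<Sum>y'\<in>A. (if f y = t then 1 else 0) * (if f y' = t then 1 else 0))"
      by (simp add: c_def power2_eq_square sum_product)
    also have "\<dots> = (\<Sum>y\<in>A. \<Sum>y'\<in>A. \<Sum>t\<in>f ` A. (if f y = t then 1 else 0) * (if f y' = t then 1 else 0))"
      by (simp add: sum.swap[of _ "f ` A"])
    also have "\<dots> = (\<Sum>y\<in>A. \<Sum>y'\<in>A. if f y = f y' then 1 else 0)"
    proof (intro sum.cong refl)
      fix y y' assume "y \<in> A"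
      have "(\<Sum>t\<in>f ` A. (if f y = t then 1 else 0) * (if f y' = t then 1 else 0))
          = (\<Sum>t\<in>f ` A. if t = f y then (if f y = f y' then 1 else 0) else 0 :: real)"
        by (rule sum.cong) auto
      also have "\<dots> = (if f y = f y' then 1 else 0)"
        using assms \<open>y \<in> A\<close> by (simp only: sum.delta finite_imageI image_eqI) simp
      finally show "(\<Sum>t\<in>f ` A. (if f y = t then 1 else 0) * (if f y' = t then 1 else 0))
          = (if f y = f y' then 1 else 0 :: real)" .
    qed
    finally show ?thesis .
  qed
  ultimately show ?thesis
    using sum_squared_le_card_sum_squares[OF finite_imageI[OF assms, of f], where f = c] by simp
qed

lemma energy_terms_le:
  fixes a Q s :: real
  assumes Q: "Q \<ge> 1" and s: "s = Q ^ (4*k+1) - (Q - 1) * Q ^ (2*k)" and a: "Q ^ (2*k+1) \<le> a"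
  shows "a * s + a^2 * (Q ^ (4*k) - s / Q) \<le> 2 * a^3 / Q"
proof -
  have "0 \<le> Q ^ (2*k+1)" using Q by simp
  then have a0: "a \<ge> 0" using a by linarith
  have "a * s \<le> a * Q ^ (4*k+1)" using s Q a0 by (intro mult_left_mono) auto
  also have "\<dots> \<le> a^3 / Q"
  proof -
    have "Q ^ (4*k+2) = (Q ^ (2*k+1))^2" unfolding power_mult[symmetric] by (simp add: algebra_simps)
    also have "\<dots> \<le> a^2" using a Q by (intro power_mono) auto
    finally have "a * (Q * Q ^ (4*k+1)) \<le> a * a^2" using a0 by (intro mult_left_mono) auto
    then show ?thesis using Q by (simp add: field_simps power2_eq_square power3_eq_cube)
  qed
  finally have t1: "a * s \<le> a^3 / Q" .
  have "Q ^ (4*k) - s / Q = (Q - 1) * Q ^ (2*k) / Q" using s Q by (simp add: field_simps)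
  also have "\<dots> \<le> Q ^ (2*k)" using Q by (simp add: field_simps)
  finally have "a^2 * (Q ^ (4*k) - s / Q) \<le> a^2 * Q ^ (2*k)" by (simp add: mult_left_mono)
  also have "\<dots> \<le> a^3 / Q"
  proof -
    have "a^2 * (Q * Q ^ (2*k)) \<le> a^2 * a" using a by (simp add: mult_left_mono)
    then show ?thesis using Q by (simp add: field_simps power2_eq_square power3_eq_cube)
  qed
  finally show ?thesis using t1 by simp
qed

locale field_3_mod_4 = field R for R :: "('a,'b) ring_scheme" (structure) +
  assumes fin: "finite (carrier R)" and q_mod_4: "card (carrier R) mod 4 = 3"
begin

abbreviation "q \<equiv> card (carrier R)"

lemma odd_q: "odd q" using q_mod_4 by presburger

lemma q_ge_3: "q \<ge> 3" using q_mod_4 by (metis mod_less_eq_dividend)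

lemma two_nonzero: "\<one> \<oplus> \<one> \<noteq> \<zero>"
proof
  assume h: "\<one> \<oplus> \<one> = \<zero>"
  have "add_pow R (order (add_monoid R)) \<one> = \<zero>"
    using add.pow_order_eq_1[of \<one>] by simp
  hence a: "add_pow R q \<one> = \<zero>" by (simp add: order_def)
  obtain m where m: "q = Suc (2*m)" using odd_q by (metis oddE Suc_eq_plus1 add.commute)
  have "add_pow R (2*m) \<one> = add_pow R m (add_pow R (2::nat) \<one>)"
    by (simp add: add.nat_pow_pow mult.commute)
  also have "add_pow R (2::nat) \<one> = \<one> \<oplus> \<one>" by (simp add: numeral_2_eq_2)
  finally have "add_pow R (2*m) \<one> = \<zero>" using h by simp
  hence "add_pow R q \<one> = \<one>" using m by simp
  with a show False by simp
qed

lemma minus_ne_self: "s \<in> carrier R \<Longrightarrow> s \<noteq> \<zero> \<Longrightarrow> \<ominus> s \<noteq> s"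
proof
  assume s: "s \<in> carrier R" "s \<noteq> \<zero>" and h: "\<ominus> s = s"
  have "(\<one> \<oplus> \<one>) \<otimes> s = s \<oplus> s" using s by algebra
  also have "\<dots> = \<zero>" using h s by (metis r_neg)
  finally show False using integral[of "\<one> \<oplus> \<one>" s] s two_nonzero by simp
qed

lemma add_eq_iff_eq_minus:
  assumes "x \<in> carrier R" "u \<in> carrier R" "c \<in> carrier R"
  shows "x \<oplus> u = c \<longleftrightarrow> x = c \<ominus> u"
proof
  show "x = c \<ominus> u" if "x \<oplus> u = c"
  proof -
    have "x = (x \<oplus> u) \<ominus> u" using assms by algebra
    then show ?thesis using that by simp
  qed
  show "x \<oplus> u = c" if "x = c \<ominus> u"
  proof -
    have "(c \<ominus> u) \<oplus> u = c" using assms by algebra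
    then show ?thesis using that by simp
  qed
qed

lemma add_eq_zero_imp_eq_minus: "a \<in> carrier R \<Longrightarrow> b \<in> carrier R \<Longrightarrow> a \<oplus> b = \<zero> \<Longrightarrow> b = \<ominus> a"
  using minus_equality[of b a] by (simp add: a_comm)

lemma square_eq_squareD: "a \<in> carrier R \<Longrightarrow> b \<in> carrier R \<Longrightarrow> a \<otimes> a = b \<otimes> b \<Longrightarrow> a = b \<or> a = \<ominus> b"
proof -
  assume a: "a \<in> carrier R" and b: "b \<in> carrier R" and h: "a \<otimes> a = b \<otimes> b"
  have "(a \<ominus> b) \<otimes> (a \<oplus> b) = a \<otimes> a \<ominus> b \<otimes> b" using a b by algebra
  also have "\<dots> = \<zero>" using h a b by simp
  finally have "a \<ominus> b = \<zero> \<or> a \<oplus> b = \<zero>" using a b integral by blast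
  moreover have "a \<ominus> b = \<zero> \<Longrightarrow> a = b"
  proof -
    assume "a \<ominus> b = \<zero>"
    hence "a \<oplus> \<ominus> b = \<zero>" by (simp add: a_minus_def)
    hence "\<ominus> (\<ominus> b) = a" using minus_equality[of a "\<ominus> b"] a b by simp
    thus "a = b" using b by simp
  qed
  moreover have "a \<oplus> b = \<zero> \<Longrightarrow> a = \<ominus> b"
    using minus_equality[of a b] a b by simp
  ultimately show ?thesis by blast
qed

lemma square_ne_minus_one: "x \<in> carrier R \<Longrightarrow> x \<otimes> x \<noteq> \<ominus> \<one>"
proof
  assume x: "x \<in> carrier R" and h: "x \<otimes> x = \<ominus> \<one>"
  have x0: "x \<noteq> \<zero>" using h two_nonzero by (metis l_null one_closed r_neg zero_closed add.inv_eq_1_iff)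
  have "x [^] card (Units R) = \<one>"
    using units_power_order_eq_one[of x] x x0 fin field_Units by auto
  hence a: "x [^] (q - 1) = \<one>" using field_Units fin by (simp add: card_Diff_singleton)
  obtain m where m: "q - 1 = 2 * (2*m+1)"
  proof -
    have "q = 4 * (q div 4) + 3" using q_mod_4 by presburger
    hence "q - 1 = 2 * (2 * (q div 4) + 1)" by presburger
    thus ?thesis using that by blast
  qed
  have m1: "\<ominus>\<one> \<in> carrier R" by simp
  have sq: "(\<ominus>\<one>) [^] (2::nat) = \<one>"
    by (simp add: numeral_2_eq_2) algebra
  have "x [^] (q - 1) = x [^] ((2::nat) * (2*m+1))" using m by (simp only:)
  also have "\<dots> = (x [^] (2::nat)) [^] (2*m+1)" using x by (simp only: nat_pow_pow)
  also have "x [^] (2::nat) = \<ominus>\<one>" using h x by (simp add: numeral_2_eq_2)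
  also have "(\<ominus>\<one>) [^] (2*m+1) = ((\<ominus>\<one>) [^] (2::nat)) [^] m \<otimes> \<ominus>\<one>"
    using m1 by (simp add: nat_pow_pow nat_pow_mult[symmetric] mult.commute)
  also have "\<dots> = \<ominus>\<one>" using sq by simp
  finally have "\<ominus>\<one> = \<one>" using a by simp
  hence "\<one> \<oplus> \<one> = \<zero>" by (metis l_neg one_closed)
  with two_nonzero show False by simp
qed

lemma sum_two_squares_eq_zeroD:
  assumes a: "a \<in> carrier R" and b: "b \<in> carrier R" and h: "a \<otimes> a \<oplus> b \<otimes> b = \<zero>"
  shows "a = \<zero>"
proof (rule ccontr)
  assume a0: "a \<noteq> \<zero>"
  have ia: "inv a \<in> carrier R" "inv a \<otimes> a = \<one>" using a a0 field_Units by auto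
  have "(b \<otimes> inv a) \<otimes> (b \<otimes> inv a) = (a \<otimes> a \<oplus> b \<otimes> b) \<otimes> (inv a \<otimes> inv a) \<ominus> (inv a \<otimes> a) \<otimes> (inv a \<otimes> a)"
    using a b ia(1) by algebra
  also have "\<dots> = \<zero> \<ominus> \<one>" using h ia a b by simp
  also have "\<dots> = \<ominus> \<one>" by algebra
  finally show False using square_ne_minus_one[of "b \<otimes> inv a"] b ia by simp
qed

lemma card_carrier_le_twice_card_squares: "q \<le> 2 * card ((\<lambda>x. x \<otimes> x) ` carrier R)"
proof -
  let ?S = "(\<lambda>x. x \<otimes> x) ` carrier R"
  have "card {x \<in> carrier R. x \<otimes> x = s} \<le> 2" if "s \<in> ?S" for s
  proof -
    obtain r where r: "r \<in> carrier R" "s = r \<otimes> r" using \<open>s \<in> ?S\<close> by auto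
    then have "{x \<in> carrier R. x \<otimes> x = s} \<subseteq> {r, \<ominus> r}" using square_eq_squareD by auto
    moreover have "card {r, \<ominus> r} \<le> 2" by (cases "r = \<ominus> r") auto
    ultimately show ?thesis by (meson card_mono finite.emptyI finite.insertI order_trans)
  qed
  then have "(\<Sum>s\<in>?S. card {x \<in> carrier R. x \<otimes> x = s}) \<le> (\<Sum>s\<in>?S. 2)"
    by (rule sum_mono)
  moreover have "q = (\<Sum>s\<in>?S. card {x \<in> carrier R. x \<otimes> x = s})"
    using fin by (intro card_eq_sum_card_fibres) auto
  ultimately show ?thesis by (simp add: mult.commute)
qed

lemma exists_sum_two_squares:
  assumes e: "e \<in> carrier R"
  shows "\<exists>a\<in>carrier R. \<exists>b\<in>carrier R. a \<otimes> a \<oplus> b \<otimes> b = e"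
proof (rule ccontr)
  assume none: "\<not> ?thesis"
  define S where "S = (\<lambda>x. x \<otimes> x) ` carrier R"
  define T where "T = (\<lambda>s. e \<ominus> s) ` S"
  have S: "S \<subseteq> carrier R" and T: "T \<subseteq> carrier R" using e unfolding S_def T_def by auto
  have "inj_on (\<lambda>s. e \<ominus> s) S"
  proof (rule inj_onI)
    fix s t assume "s \<in> S" "t \<in> S" "e \<ominus> s = e \<ominus> t"
    then have "e \<ominus> (e \<ominus> s) = e \<ominus> (e \<ominus> t)" by simp
    moreover have "e \<ominus> (e \<ominus> u) = u" if "u \<in> carrier R" for u using that e by algebra
    ultimately show "s = t" using S \<open>s \<in> S\<close> \<open>t \<in> S\<close> by (metis subsetD)
  qed
  then have "card T = card S" unfolding T_def by (rule card_image)
  moreover have "S \<inter> T = {}"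
  proof (rule ccontr)
    assume "S \<inter> T \<noteq> {}"
    then obtain a b where "a \<in> carrier R" "b \<in> carrier R" "a \<otimes> a = e \<ominus> b \<otimes> b"
      unfolding S_def T_def by blast
    moreover from this have "a \<otimes> a \<oplus> b \<otimes> b = e" using e by (simp add: add_eq_iff_eq_minus)
    ultimately show False using none by blast
  qed
  moreover have "card (S \<union> T) \<le> q" using S T fin by (intro card_mono) auto
  ultimately have "2 * card S \<le> q" using fin S T by (simp add: card_Un_disjoint finite_subset)
  then show False using card_carrier_le_twice_card_squares odd_q unfolding S_def by presburger
qed

definition dot :: "nat \<Rightarrow> (nat \<Rightarrow> 'a) \<Rightarrow> (nat \<Rightarrow> 'a) \<Rightarrow> 'a" where
  "dot n x y = (\<Oplus>i\<in>{..<n}. x i \<otimes> y i)"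

definition vadd_smult :: "nat \<Rightarrow> (nat \<Rightarrow> 'a) \<Rightarrow> 'a \<Rightarrow> (nat \<Rightarrow> 'a) \<Rightarrow> (nat \<Rightarrow> 'a)" where
  "vadd_smult n x c y = restrict (\<lambda>i. x i \<oplus> c \<otimes> y i) {..<n}"

definition zero_vec :: "nat \<Rightarrow> (nat \<Rightarrow> 'a)" where "zero_vec n = restrict (\<lambda>_. \<zero>) {..<n}"

definition unit_vec :: "nat \<Rightarrow> nat \<Rightarrow> (nat \<Rightarrow> 'a)" where "unit_vec n i = restrict (\<lambda>j. if j = i then \<one> else \<zero>) {..<n}"

lemma fvecs_carrier: "x \<in> fvecs R n \<Longrightarrow> i < n \<Longrightarrow> x i \<in> carrier R"
  unfolding fvecs_def by auto

lemma fvecs_undefined: "x \<in> fvecs R n \<Longrightarrow> \<not> i < n \<Longrightarrow> x i = undefined"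
  unfolding fvecs_def by auto

lemma fvecs_eqI: "x \<in> fvecs R n \<Longrightarrow> y \<in> fvecs R n \<Longrightarrow> (\<And>i. i < n \<Longrightarrow> x i = y i) \<Longrightarrow> x = y"
  unfolding fvecs_def by (rule PiE_ext) auto

lemma card_fvecs: "card (fvecs R n) = q ^ n"
  unfolding fvecs_def by (simp add: card_PiE)

lemma finite_fvecs: "finite (fvecs R n)"
  unfolding fvecs_def using fin by (simp add: finite_PiE)

lemma fvecs_0: "fvecs R 0 = {\<lambda>_. undefined}"
  unfolding fvecs_def by simp

lemma fvecs_upd: "y \<in> fvecs R n \<Longrightarrow> a \<in> carrier R \<Longrightarrow> y(n := a) \<in> fvecs R (Suc n)"
  unfolding fvecs_def by (auto simp: PiE_def extensional_def Pi_def less_Suc_eq)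

lemma fvecs_upd_undefined: "y \<in> fvecs R n \<Longrightarrow> y(n := undefined) = y"
  using fvecs_undefined[of y n n] by (simp add: fun_upd_idem)

lemma fvecs_restrict_last: "x \<in> fvecs R (Suc n) \<Longrightarrow> x(n := undefined) \<in> fvecs R n"
  unfolding fvecs_def by (auto simp: PiE_def extensional_def Pi_def less_Suc_eq)

lemma zero_vec_fvecs: "zero_vec n \<in> fvecs R n" unfolding zero_vec_def fvecs_def by simp

lemma unit_vec_fvecs: "unit_vec n i \<in> fvecs R n" unfolding unit_vec_def fvecs_def by simp

lemma vadd_smult_fvecs: "x \<in> fvecs R n \<Longrightarrow> y \<in> fvecs R n \<Longrightarrow> c \<in> carrier R \<Longrightarrow> vadd_smult n x c y \<in> fvecs R n"
  unfolding vadd_smult_def fvecs_def by auto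

lemma vadd_smult_apply: "i < n \<Longrightarrow> vadd_smult n x c y i = x i \<oplus> c \<otimes> y i"
  unfolding vadd_smult_def by auto

lemma dot_closed: "x \<in> fvecs R n \<Longrightarrow> y \<in> fvecs R n \<Longrightarrow> dot n x y \<in> carrier R"
  unfolding dot_def by (intro finsum_closed) (auto simp: fvecs_carrier)

lemma dot_comm: "x \<in> fvecs R n \<Longrightarrow> y \<in> fvecs R n \<Longrightarrow> dot n x y = dot n y x"
  unfolding dot_def by (intro finsum_cong') (auto simp: fvecs_carrier m_comm)

lemma dot_vadd_smult_left: 
  assumes x: "x \<in> fvecs R n" and y: "y \<in> fvecs R n" and z: "z \<in> fvecs R n" and c: "c \<in> carrier R"
  shows "dot n (vadd_smult n x c y) z = dot n x z \<oplus> c \<otimes> dot n y z"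
proof -
  have "dot n (vadd_smult n x c y) z = (\<Oplus>i\<in>{..<n}. x i \<otimes> z i \<oplus> c \<otimes> (y i \<otimes> z i))"
    unfolding dot_def
  proof (intro finsum_cong')
    fix i assume "i \<in> {..<n}"
    hence i: "i < n" by simp
    have "x i \<in> carrier R" "y i \<in> carrier R" "z i \<in> carrier R" using x y z i fvecs_carrier by auto
    thus "vadd_smult n x c y i \<otimes> z i = x i \<otimes> z i \<oplus> c \<otimes> (y i \<otimes> z i)"
      using i c by (simp add: vadd_smult_apply) algebra
  qed (use x y z c fvecs_carrier in auto)
  also have "\<dots> = dot n x z \<oplus> (\<Oplus>i\<in>{..<n}. c \<otimes> (y i \<otimes> z i))"
    unfolding dot_def by (rule finsum_addf) (use x y z c fvecs_carrier in auto)
  also have "(\<Oplus>i\<in>{..<n}. c \<otimes> (y i \<otimes> z i)) = c \<otimes> dot n y z"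
    unfolding dot_def by (rule finsum_rdistr[symmetric]) (use y z c fvecs_carrier in auto)
  finally show ?thesis .
qed

lemma dot_vadd_smult_right: 
  assumes x: "x \<in> fvecs R n" and y: "y \<in> fvecs R n" and z: "z \<in> fvecs R n" and c: "c \<in> carrier R"
  shows "dot n z (vadd_smult n x c y) = dot n z x \<oplus> c \<otimes> dot n z y"
  using dot_vadd_smult_left[OF assms] dot_comm vadd_smult_fvecs assms by metis

lemma dot_vadd_smult_self:
  assumes x: "x \<in> fvecs R n" and y: "y \<in> fvecs R n" and c: "c \<in> carrier R"
  shows "dot n (vadd_smult n x c y) (vadd_smult n x c y) = dot n x x \<oplus> (\<one> \<oplus> \<one>) \<otimes> c \<otimes> dot n x y \<oplus> c \<otimes> c \<otimes> dot n y y"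
proof -
  have L: "vadd_smult n x c y \<in> fvecs R n" using vadd_smult_fvecs[OF x y c] .
  have "dot n (vadd_smult n x c y) (vadd_smult n x c y) = dot n x (vadd_smult n x c y) \<oplus> c \<otimes> dot n y (vadd_smult n x c y)"
    by (rule dot_vadd_smult_left[OF x y L c])
  also have "dot n x (vadd_smult n x c y) = dot n x x \<oplus> c \<otimes> dot n x y" by (rule dot_vadd_smult_right[OF x y x c])
  also have "dot n y (vadd_smult n x c y) = dot n y x \<oplus> c \<otimes> dot n y y" by (rule dot_vadd_smult_right[OF x y y c])
  also have "dot n y x = dot n x y" using dot_comm[OF x y] by simp
  finally show ?thesis using dot_closed[OF x x] dot_closed[OF x y] dot_closed[OF y y] c by algebra
qed

lemma dot_zero_vec: "x \<in> fvecs R n \<Longrightarrow> dot n x (zero_vec n) = \<zero>"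
proof -
  assume x: "x \<in> fvecs R n"
  have "dot n x (zero_vec n) = (\<Oplus>i\<in>{..<n}. \<zero>)"
    unfolding dot_def zero_vec_def by (intro finsum_cong') (use x fvecs_carrier in auto)
  thus ?thesis by simp
qed

lemma dot_unit_vec: assumes y: "y \<in> fvecs R n" and i: "i < n" shows "dot n (unit_vec n i) y = y i"
proof -
  have "dot n (unit_vec n i) y = (\<Oplus>j\<in>{..<n}. if i = j then y j else \<zero>)"
    unfolding dot_def unit_vec_def by (intro finsum_cong') (use y fvecs_carrier in auto)
  also have "\<dots> = y i" by (rule finsum_singleton) (use i y fvecs_carrier in auto)
  finally show ?thesis .
qed

lemma dot_neg_self:
  assumes w: "w \<in> fvecs R n"
  shows "dot n (vadd_smult n (zero_vec n) (\<ominus> \<one>) w) (vadd_smult n (zero_vec n) (\<ominus> \<one>) w) = dot n w w"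
proof -
  have m1: "\<ominus> \<one> \<in> carrier R" by simp
  have "dot n (zero_vec n) (zero_vec n) = \<zero>" using dot_zero_vec[OF zero_vec_fvecs] .
  moreover have "dot n (zero_vec n) w = \<zero>" using dot_zero_vec[OF w] dot_comm[OF w zero_vec_fvecs] by simp
  ultimately show ?thesis
    using dot_vadd_smult_self[OF zero_vec_fvecs w m1] dot_closed[OF w w] by simp algebra
qed

lemma dot_upd:
  assumes y: "y \<in> fvecs R n" and z: "z \<in> fvecs R n" and a: "a \<in> carrier R" and b: "b \<in> carrier R"
  shows "dot (Suc n) (y(n := a)) (z(n := b)) = dot n y z \<oplus> a \<otimes> b"
proof -
  have "dot (Suc n) (y(n := a)) (z(n := b)) = a \<otimes> b \<oplus> (\<Oplus>i\<in>{..<n}. (y(n := a)) i \<otimes> (z(n := b)) i)"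
    unfolding dot_def lessThan_Suc
    by (subst finsum_insert) (use y z a b fvecs_carrier in auto)
  also have "(\<Oplus>i\<in>{..<n}. (y(n := a)) i \<otimes> (z(n := b)) i) = dot n y z"
    unfolding dot_def by (intro finsum_cong') (use y z fvecs_carrier in auto)
  also have "a \<otimes> b \<oplus> dot n y z = dot n y z \<oplus> a \<otimes> b"
    using a b dot_closed[OF y z] by (intro a_comm) auto
  finally show ?thesis .
qed

lemma dot_upd2:
  assumes "z \<in> fvecs R m" "z' \<in> fvecs R m" "a \<in> carrier R" "a' \<in> carrier R" "b \<in> carrier R" "b' \<in> carrier R"
  shows "dot (Suc (Suc m)) ((z(m := a))(Suc m := b)) ((z'(m := a'))(Suc m := b')) = (dot m z z' \<oplus> a \<otimes> a') \<oplus> b \<otimes> b'"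
  using dot_upd[OF fvecs_upd[OF assms(1,3)] fvecs_upd[OF assms(2,4)] assms(5,6)] dot_upd[OF assms(1-4)] by simp

lemma dot_upd3:
  assumes "z \<in> fvecs R m" "z' \<in> fvecs R m" "a \<in> carrier R" "a' \<in> carrier R" "b \<in> carrier R" "b' \<in> carrier R"
    "c \<in> carrier R" "c' \<in> carrier R"
  shows "dot (Suc (Suc (Suc m))) (((z(m := a))(Suc m := b))(Suc (Suc m) := c)) (((z'(m := a'))(Suc m := b'))(Suc (Suc m) := c'))
     = ((dot m z z' \<oplus> a \<otimes> a') \<oplus> b \<otimes> b') \<oplus> c \<otimes> c'"
proof -
  have "((z(m := a))(Suc m := b)) \<in> fvecs R (Suc (Suc m))" "((z'(m := a'))(Suc m := b')) \<in> fvecs R (Suc (Suc m))"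
    using fvecs_upd assms by auto
  thus ?thesis using dot_upd[of "((z(m := a))(Suc m := b))" "Suc (Suc m)" "((z'(m := a'))(Suc m := b'))" c c']
      dot_upd2[OF assms(1-6)] assms(7,8) by simp
qed

lemma card_fvecs_Suc:
  "card {x \<in> fvecs R (Suc n). P x} = (\<Sum>a\<in>carrier R. card {y \<in> fvecs R n. P (y(n := a))})"
proof -
  let ?S = "Sigma (carrier R) (\<lambda>a. {y \<in> fvecs R n. P (y(n := a))})"
  have "card ?S = (\<Sum>a\<in>carrier R. card {y \<in> fvecs R n. P (y(n := a))})"
    using fin finite_fvecs by (intro card_SigmaI) auto
  moreover have bij: "bij_betw (\<lambda>(a, y). y(n := a)) ?S {x \<in> fvecs R (Suc n). P x}"
  proof (rule bij_betw_byWitness[where f'="\<lambda>x. (x n, x(n := undefined))"])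
    show "\<forall>p\<in>?S. (\<lambda>x. (x n, x(n := undefined))) ((\<lambda>(a, y). y(n := a)) p) = p"
    proof
      fix p assume "p \<in> ?S"
      then obtain a y where p: "p = (a, y)" and y: "y \<in> fvecs R n" by (cases p) simp
      show "(\<lambda>x. (x n, x(n := undefined))) ((\<lambda>(a, y). y(n := a)) p) = p"
        using p fvecs_upd_undefined[OF y] by simp
    qed
    show "\<forall>x\<in>{x \<in> fvecs R (Suc n). P x}. (\<lambda>(a, y). y(n := a)) ((\<lambda>x. (x n, x(n := undefined))) x) = x"
      by simp
    show "(\<lambda>(a, y). y(n := a)) ` ?S \<subseteq> {x \<in> fvecs R (Suc n). P x}"
    proof
      fix x assume "x \<in> (\<lambda>(a, y). y(n := a)) ` ?S"
      then obtain p where p: "p \<in> ?S" and xp: "x = (\<lambda>(a, y). y(n := a)) p" by (rule imageE)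
      obtain a y where "p = (a, y)" by (cases p)
      hence "a \<in> carrier R" "y \<in> fvecs R n" "P (y(n := a))" "x = y(n := a)" using p xp by simp_all
      thus "x \<in> {x \<in> fvecs R (Suc n). P x}" using fvecs_upd by simp
    qed
    show "(\<lambda>x. (x n, x(n := undefined))) ` {x \<in> fvecs R (Suc n). P x} \<subseteq> ?S"
    proof
      fix p assume "p \<in> (\<lambda>x. (x n, x(n := undefined))) ` {x \<in> fvecs R (Suc n). P x}"
      then obtain x where x: "x \<in> fvecs R (Suc n)" "P x" and p: "p = (x n, x(n := undefined))" by (rule imageE) (simp, metis)
      have "x n \<in> carrier R" using fvecs_carrier[OF x(1)] by simp
      moreover have "x(n := undefined) \<in> fvecs R n" using fvecs_restrict_last[OF x(1)] .
      moreover have "P ((x(n := undefined))(n := x n))" using x(2) by simp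
      ultimately show "p \<in> ?S" using p by simp
    qed
  qed
  ultimately show ?thesis using bij_betw_same_card[OF bij] by simp
qed

lemma card_fvecs_Suc_Suc:
  "card {x \<in> fvecs R (Suc (Suc m)). P x} = (\<Sum>b\<in>carrier R. \<Sum>a\<in>carrier R. card {z \<in> fvecs R m. P ((z(m := a))(Suc m := b))})"
  using card_fvecs_Suc[of "Suc m" P] card_fvecs_Suc[of m] by simp

lemma card_fvecs_Suc_Suc_Suc:
  "card {x \<in> fvecs R (Suc (Suc (Suc m))). P x} = (\<Sum>c\<in>carrier R. \<Sum>b\<in>carrier R. \<Sum>a\<in>carrier R.
      card {z \<in> fvecs R m. P (((z(m := a))(Suc m := b))(Suc (Suc m) := c))})"
  using card_fvecs_Suc[of "Suc (Suc m)" P] card_fvecs_Suc_Suc[of m] by simp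

definition two_squares_count :: "'a \<Rightarrow> nat" where
  "two_squares_count e = card {p \<in> carrier R \<times> carrier R. snd p \<otimes> snd p \<oplus> fst p \<otimes> fst p = e}"

lemma inj_on_mult_by_pair:
  assumes al: "\<alpha> \<in> carrier R" and be: "\<beta> \<in> carrier R" and nu: "\<alpha> \<otimes> \<alpha> \<oplus> \<beta> \<otimes> \<beta> \<noteq> \<zero>"
  shows "inj_on (\<lambda>(a, b). (\<alpha> \<otimes> a \<ominus> \<beta> \<otimes> b, \<beta> \<otimes> a \<oplus> \<alpha> \<otimes> b)) (carrier R \<times> carrier R)"
proof (rule inj_onI, clarify)
  fix a b a' b' assume a: "a \<in> carrier R" and b: "b \<in> carrier R" and a': "a' \<in> carrier R" and b': "b' \<in> carrier R"
    and e1: "\<alpha> \<otimes> a \<ominus> \<beta> \<otimes> b = \<alpha> \<otimes> a' \<ominus> \<beta> \<otimes> b'" and e2: "\<beta> \<otimes> a \<oplus> \<alpha> \<otimes> b = \<beta> \<otimes> a' \<oplus> \<alpha> \<otimes> b'"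
  define \<nu> where "\<nu> = \<alpha> \<otimes> \<alpha> \<oplus> \<beta> \<otimes> \<beta>"
  have nuc: "\<nu> \<in> carrier R" using al be \<nu>_def by simp
  have "\<nu> \<otimes> a = \<alpha> \<otimes> (\<alpha> \<otimes> a \<ominus> \<beta> \<otimes> b) \<oplus> \<beta> \<otimes> (\<beta> \<otimes> a \<oplus> \<alpha> \<otimes> b)"
    using a b al be \<nu>_def by algebra
  also have "\<dots> = \<alpha> \<otimes> (\<alpha> \<otimes> a' \<ominus> \<beta> \<otimes> b') \<oplus> \<beta> \<otimes> (\<beta> \<otimes> a' \<oplus> \<alpha> \<otimes> b')" using e1 e2 by simp
  also have "\<dots> = \<nu> \<otimes> a'" using a' b' al be \<nu>_def by algebra
  finally have "a = a'" using m_lcancel[of \<nu> a a'] nu nuc a a' \<nu>_def by simp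
  have "\<nu> \<otimes> b = \<alpha> \<otimes> (\<beta> \<otimes> a \<oplus> \<alpha> \<otimes> b) \<ominus> \<beta> \<otimes> (\<alpha> \<otimes> a \<ominus> \<beta> \<otimes> b)"
    using a b al be \<nu>_def by algebra
  also have "\<dots> = \<alpha> \<otimes> (\<beta> \<otimes> a' \<oplus> \<alpha> \<otimes> b') \<ominus> \<beta> \<otimes> (\<alpha> \<otimes> a' \<ominus> \<beta> \<otimes> b')" using e1 e2 by simp
  also have "\<dots> = \<nu> \<otimes> b'" using a' b' al be \<nu>_def by algebra
  finally have "b = b'" using m_lcancel[of \<nu> b b'] nu nuc b b' \<nu>_def by simp
  with \<open>a = a'\<close> show "a = a' \<and> b = b'" ..
qed

\<comment> \<open>Multiplication by \<open>\<alpha> + \<beta>i\<close>: \<open>(\<alpha>\<^sup>2 + \<beta>\<^sup>2)(a\<^sup>2 + b\<^sup>2) = (\<alpha>a - \<beta>b)\<^sup>2 + (\<beta>a + \<alpha>b)\<^sup>2\<close>.\<close>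
lemma two_squares_count_le_scaled:
  assumes al: "\<alpha> \<in> carrier R" and be: "\<beta> \<in> carrier R" and nu: "\<alpha> \<otimes> \<alpha> \<oplus> \<beta> \<otimes> \<beta> \<noteq> \<zero>"
    and e: "e \<in> carrier R"
  shows "two_squares_count e \<le> two_squares_count ((\<alpha> \<otimes> \<alpha> \<oplus> \<beta> \<otimes> \<beta>) \<otimes> e)"
  unfolding two_squares_count_def
proof (rule card_inj_on_le)
  let ?M = "\<lambda>(a, b). (\<alpha> \<otimes> a \<ominus> \<beta> \<otimes> b, \<beta> \<otimes> a \<oplus> \<alpha> \<otimes> b)"
  show "inj_on ?M {p \<in> carrier R \<times> carrier R. snd p \<otimes> snd p \<oplus> fst p \<otimes> fst p = e}"
    by (rule inj_on_subset[OF inj_on_mult_by_pair[OF al be nu]]) auto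
  have "(\<beta> \<otimes> a \<oplus> \<alpha> \<otimes> b) \<otimes> (\<beta> \<otimes> a \<oplus> \<alpha> \<otimes> b) \<oplus> (\<alpha> \<otimes> a \<ominus> \<beta> \<otimes> b) \<otimes> (\<alpha> \<otimes> a \<ominus> \<beta> \<otimes> b)
      = (\<alpha> \<otimes> \<alpha> \<oplus> \<beta> \<otimes> \<beta>) \<otimes> (b \<otimes> b \<oplus> a \<otimes> a)" if "a \<in> carrier R" "b \<in> carrier R" for a b
    using that al be by algebra
  then show "?M ` {p \<in> carrier R \<times> carrier R. snd p \<otimes> snd p \<oplus> fst p \<otimes> fst p = e}
      \<subseteq> {p \<in> carrier R \<times> carrier R. snd p \<otimes> snd p \<oplus> fst p \<otimes> fst p = (\<alpha> \<otimes> \<alpha> \<oplus> \<beta> \<otimes> \<beta>) \<otimes> e}"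
    using al be by auto
  show "finite {p \<in> carrier R \<times> carrier R. snd p \<otimes> snd p \<oplus> fst p \<otimes> fst p = (\<alpha> \<otimes> \<alpha> \<oplus> \<beta> \<otimes> \<beta>) \<otimes> e}"
    using fin by simp
qed

lemma two_squares_count_zero: "two_squares_count \<zero> = 1"
proof -
  have "{p \<in> carrier R \<times> carrier R. snd p \<otimes> snd p \<oplus> fst p \<otimes> fst p = \<zero>} = {(\<zero>, \<zero>)}"
  proof (intro equalityI subsetI)
    fix p assume "p \<in> {p \<in> carrier R \<times> carrier R. snd p \<otimes> snd p \<oplus> fst p \<otimes> fst p = \<zero>}"
    then obtain a b where p: "p = (a, b)" "a \<in> carrier R" "b \<in> carrier R" "b \<otimes> b \<oplus> a \<otimes> a = \<zero>"
      by auto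
    then have "b = \<zero>" by (intro sum_two_squares_eq_zeroD[of b a])
    moreover have "a = \<zero>" using p by (intro sum_two_squares_eq_zeroD[of a b]) (simp_all add: a_comm)
    ultimately show "p \<in> {(\<zero>, \<zero>)}" using p by simp
  qed simp
  then show ?thesis unfolding two_squares_count_def by simp
qed

lemma two_squares_count_nonzero: assumes e: "e \<in> carrier R" "e \<noteq> \<zero>" shows "two_squares_count e = two_squares_count \<one>"
proof (rule antisym)
  have ie: "inv e \<in> carrier R" "inv e \<otimes> e = \<one>" using e field_Units by auto
  obtain a b where ab: "a \<in> carrier R" "b \<in> carrier R" "a \<otimes> a \<oplus> b \<otimes> b = inv e"
    using exists_sum_two_squares[OF ie(1)] by blast
  have "inv e \<noteq> \<zero>" using ie e by (metis l_null one_not_zero)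
  hence "two_squares_count e \<le> two_squares_count (inv e \<otimes> e)" using two_squares_count_le_scaled[OF ab(1,2) _ e(1)] ab(3) by simp
  thus "two_squares_count e \<le> two_squares_count \<one>" using e field_Units by simp
  obtain c d where cd: "c \<in> carrier R" "d \<in> carrier R" "c \<otimes> c \<oplus> d \<otimes> d = e"
    using exists_sum_two_squares[of e] e by auto
  have "two_squares_count \<one> \<le> two_squares_count (e \<otimes> \<one>)" using two_squares_count_le_scaled[OF cd(1,2) _ one_closed] cd(3) e by simp
  thus "two_squares_count \<one> \<le> two_squares_count e" using e by simp
qed

lemma two_squares_count_one: "two_squares_count \<one> = q + 1"
proof -
  have "q * q = card (carrier R \<times> carrier R)" by (simp add: card_cartesian_product)
  also have "\<dots> = (\<Sum>e\<in>carrier R. two_squares_count e)" unfolding two_squares_count_def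
    by (rule card_eq_sum_card_fibres) (use fin in auto)
  also have "\<dots> = two_squares_count \<zero> + (\<Sum>e\<in>carrier R - {\<zero>}. two_squares_count e)"
    using fin by (subst sum.remove[of _ \<zero>]) auto
  also have "(\<Sum>e\<in>carrier R - {\<zero>}. two_squares_count e) = (\<Sum>e\<in>carrier R - {\<zero>}. two_squares_count \<one>)"
    by (rule sum.cong) (auto intro: two_squares_count_nonzero)
  also have "\<dots> = (q - 1) * two_squares_count \<one>" using fin by (simp add: card_Diff_singleton)
  finally have h: "q * q = 1 + (q - 1) * two_squares_count \<one>" using two_squares_count_zero by simp
  have "(q - 1) * (q + 1) = q * q - 1" using q_ge_3 by (simp add: algebra_simps)
  hence e: "(q - 1) * two_squares_count \<one> = (q - 1) * (q + 1)" using h by simp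
  have nz: "q - 1 \<noteq> 0" using q_ge_3 by simp
  show ?thesis using mult_left_cancel[OF nz, of "two_squares_count \<one>" "q + 1"] e by blast
qed

lemma sum_pairs_two_squares:
  fixes g :: "'a \<Rightarrow> real"
  shows "(\<Sum>a\<in>carrier R. \<Sum>b\<in>carrier R. g (b \<otimes> b \<oplus> a \<otimes> a)) = (\<Sum>e\<in>carrier R. real (two_squares_count e) * g e)"
proof -
  let ?h = "\<lambda>p. snd p \<otimes> snd p \<oplus> fst p \<otimes> fst p"
  have "(\<Sum>a\<in>carrier R. \<Sum>b\<in>carrier R. g (b \<otimes> b \<oplus> a \<otimes> a)) = (\<Sum>p\<in>carrier R \<times> carrier R. g (?h p))"
    by (simp add: sum.cartesian_product split_def)
  also have "\<dots> = (\<Sum>e\<in>carrier R. \<Sum>p\<in>{p \<in> carrier R \<times> carrier R. ?h p = e}. g (?h p))"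
    by (rule sum.group[symmetric]) (use fin in auto)
  also have "\<dots> = (\<Sum>e\<in>carrier R. real (two_squares_count e) * g e)"
  proof (rule sum.cong[OF refl])
    fix e assume "e \<in> carrier R"
    have "(\<Sum>p\<in>{p \<in> carrier R \<times> carrier R. ?h p = e}. g (?h p)) = (\<Sum>p\<in>{p \<in> carrier R \<times> carrier R. ?h p = e}. g e)"
      by (rule sum.cong) auto
    thus "(\<Sum>p\<in>{p \<in> carrier R \<times> carrier R. ?h p = e}. g (?h p)) = real (two_squares_count e) * g e"
      unfolding two_squares_count_def by simp
  qed
  finally show ?thesis .
qed

definition sphere_count :: "nat \<Rightarrow> 'a \<Rightarrow> nat" where
  "sphere_count n c = card {x \<in> fvecs R n. dot n x x = c}"

lemma sphere_count_Suc_Suc: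
  assumes c: "c \<in> carrier R"
  shows "sphere_count (Suc (Suc n)) c = (\<Sum>a\<in>carrier R. \<Sum>b\<in>carrier R. sphere_count n (c \<ominus> (b \<otimes> b \<oplus> a \<otimes> a)))"
proof -
  have "sphere_count (Suc (Suc n)) c = (\<Sum>a\<in>carrier R. card {y \<in> fvecs R (Suc n). dot (Suc (Suc n)) (y(Suc n := a)) (y(Suc n := a)) = c})"
    unfolding sphere_count_def by (rule card_fvecs_Suc)
  also have "\<dots> = (\<Sum>a\<in>carrier R. \<Sum>b\<in>carrier R. sphere_count n (c \<ominus> (b \<otimes> b \<oplus> a \<otimes> a)))"
  proof (rule sum.cong[OF refl])
    fix a assume a: "a \<in> carrier R"
    have "{y \<in> fvecs R (Suc n). dot (Suc (Suc n)) (y(Suc n := a)) (y(Suc n := a)) = c}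
        = {y \<in> fvecs R (Suc n). dot (Suc n) y y \<oplus> a \<otimes> a = c}"
      using dot_upd a by auto
    hence "card {y \<in> fvecs R (Suc n). dot (Suc (Suc n)) (y(Suc n := a)) (y(Suc n := a)) = c}
        = (\<Sum>b\<in>carrier R. card {z \<in> fvecs R n. dot (Suc n) (z(n := b)) (z(n := b)) \<oplus> a \<otimes> a = c})"
      using card_fvecs_Suc[of n "\<lambda>y. dot (Suc n) y y \<oplus> a \<otimes> a = c"] by simp
    also have "\<dots> = (\<Sum>b\<in>carrier R. sphere_count n (c \<ominus> (b \<otimes> b \<oplus> a \<otimes> a)))"
    proof (rule sum.cong[OF refl])
      fix b assume b: "b \<in> carrier R"
      have "{z \<in> fvecs R n. dot (Suc n) (z(n := b)) (z(n := b)) \<oplus> a \<otimes> a = c}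
          = {z \<in> fvecs R n. dot n z z = c \<ominus> (b \<otimes> b \<oplus> a \<otimes> a)}"
      proof (rule Collect_cong)
        fix z
        show "(z \<in> fvecs R n \<and> dot (Suc n) (z(n := b)) (z(n := b)) \<oplus> a \<otimes> a = c) =
              (z \<in> fvecs R n \<and> dot n z z = c \<ominus> (b \<otimes> b \<oplus> a \<otimes> a))"
        proof (cases "z \<in> fvecs R n")
          case True
          have zz: "dot n z z \<in> carrier R" using dot_closed[OF True True] .
          have "dot (Suc n) (z(n := b)) (z(n := b)) \<oplus> a \<otimes> a = dot n z z \<oplus> (b \<otimes> b \<oplus> a \<otimes> a)"
            using dot_upd[OF True True b b] zz a b by (simp add: a_assoc)
          thus ?thesis using True add_eq_iff_eq_minus[OF zz _ c, of "b \<otimes> b \<oplus> a \<otimes> a"] a b by simp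
        qed simp
      qed
      thus "card {z \<in> fvecs R n. dot (Suc n) (z(n := b)) (z(n := b)) \<oplus> a \<otimes> a = c} = sphere_count n (c \<ominus> (b \<otimes> b \<oplus> a \<otimes> a))"
        unfolding sphere_count_def by simp
    qed
    finally show "card {y \<in> fvecs R (Suc n). dot (Suc (Suc n)) (y(Suc n := a)) (y(Suc n := a)) = c}
        = (\<Sum>b\<in>carrier R. sphere_count n (c \<ominus> (b \<otimes> b \<oplus> a \<otimes> a)))" .
  qed
  finally show ?thesis .
qed

lemma sum_sphere_count: "(\<Sum>e\<in>carrier R. sphere_count n e) = q ^ n"
proof -
  have "card (fvecs R n) = (\<Sum>e\<in>carrier R. card {x \<in> fvecs R n. dot n x x = e})"
    by (rule card_eq_sum_card_fibres) (use fin finite_fvecs dot_closed in auto)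
  thus ?thesis unfolding sphere_count_def card_fvecs by simp
qed

lemma sum_sphere_count_minus: assumes c: "c \<in> carrier R" shows "(\<Sum>e\<in>carrier R. sphere_count n (c \<ominus> e)) = q ^ n"
proof -
  have "(\<Sum>e\<in>carrier R. sphere_count n (c \<ominus> e)) = (\<Sum>e\<in>carrier R. sphere_count n e)"
  proof -
    have cc: "\<And>e. e \<in> carrier R \<Longrightarrow> c \<ominus> (c \<ominus> e) = e" using c by algebra
    show ?thesis
      by (rule sum.reindex_bij_witness[where i="\<lambda>e. c \<ominus> e" and j="\<lambda>e. c \<ominus> e"]) (use c cc in auto)
  qed
  thus ?thesis using sum_sphere_count by simp
qed

\<comment> \<open>Split off the last two coordinates and count the solutions of \<open>a\<^sup>2 + b\<^sup>2 = e\<close>.\<close>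
lemma sphere_count_rec:
  assumes c: "c \<in> carrier R"
  shows "real (sphere_count (Suc (Suc n)) c) = (real q + 1) * real q ^ n - real q * real (sphere_count n c)"
proof -
  have "real (sphere_count (Suc (Suc n)) c) = (\<Sum>a\<in>carrier R. \<Sum>b\<in>carrier R. real (sphere_count n (c \<ominus> (b \<otimes> b \<oplus> a \<otimes> a))))"
    using sphere_count_Suc_Suc[OF c] by simp
  also have "\<dots> = (\<Sum>e\<in>carrier R. real (two_squares_count e) * real (sphere_count n (c \<ominus> e)))"
    by (rule sum_pairs_two_squares)
  also have "\<dots> = real (two_squares_count \<zero>) * real (sphere_count n (c \<ominus> \<zero>)) + (\<Sum>e\<in>carrier R - {\<zero>}. real (two_squares_count e) * real (sphere_count n (c \<ominus> e)))"
    using fin by (subst sum.remove[of _ \<zero>]) auto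
  also have "(\<Sum>e\<in>carrier R - {\<zero>}. real (two_squares_count e) * real (sphere_count n (c \<ominus> e))) = (\<Sum>e\<in>carrier R - {\<zero>}. (real q + 1) * real (sphere_count n (c \<ominus> e)))"
  proof (rule sum.cong[OF refl])
    fix e assume "e \<in> carrier R - {\<zero>}"
    hence "two_squares_count e = q + 1" using two_squares_count_nonzero[of e] two_squares_count_one by auto
    thus "real (two_squares_count e) * real (sphere_count n (c \<ominus> e)) = (real q + 1) * real (sphere_count n (c \<ominus> e))" by simp
  qed
  also have "\<dots> = (real q + 1) * (\<Sum>e\<in>carrier R - {\<zero>}. real (sphere_count n (c \<ominus> e)))"
    by (simp add: sum_distrib_left)
  also have "(\<Sum>e\<in>carrier R - {\<zero>}. real (sphere_count n (c \<ominus> e))) = (\<Sum>e\<in>carrier R. real (sphere_count n (c \<ominus> e))) - real (sphere_count n (c \<ominus> \<zero>))"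
    using fin by (subst sum.remove[of "carrier R" \<zero>]) auto
  also have "(\<Sum>e\<in>carrier R. real (sphere_count n (c \<ominus> e))) = real q ^ n"
    using sum_sphere_count_minus[OF c, of n] by (metis of_nat_sum of_nat_power)
  also have "c \<ominus> \<zero> = c" using c by algebra
  finally show ?thesis using two_squares_count_zero by (simp add: algebra_simps)
qed

lemma sphere_count_0: "sphere_count 0 c = (if c = \<zero> then 1 else 0)"
  unfolding sphere_count_def fvecs_0 dot_def by simp

lemma sphere_count_even:
  assumes c: "c \<in> carrier R"
  shows "real (sphere_count (2*j+2) c) = real q ^ (2*j+1) + (- real q) ^ j * (if c = \<zero> then 1 - real q else 1)"
proof (induction j)
  case 0
  have "real (sphere_count (Suc (Suc 0)) c) = (real q + 1) * real q ^ 0 - real q * real (sphere_count 0 c)" by (rule sphere_count_rec[OF c])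
  thus ?case by (simp add: sphere_count_0)
next
  case (Suc j)
  have "real (sphere_count (Suc (Suc (2*j+2))) c) = (real q + 1) * real q ^ (2*j+2) - real q * real (sphere_count (2*j+2) c)"
    by (rule sphere_count_rec[OF c])
  also have "\<dots> = real q ^ (2*Suc j+1) + (- real q) ^ Suc j * (if c = \<zero> then 1 - real q else 1)"
    using Suc.IH by (simp add: algebra_simps)
  finally show ?case by simp
qed

lemma sphere_count_1: "sphere_count 1 c = card {a \<in> carrier R. a \<otimes> a = c}"
proof -
  have "sphere_count 1 c = (\<Sum>a\<in>carrier R. card {y \<in> fvecs R 0. dot 1 (y(0 := a)) (y(0 := a)) = c})"
    unfolding sphere_count_def using card_fvecs_Suc[of 0 "\<lambda>x. dot 1 x x = c"] by simp
  also have "\<dots> = (\<Sum>a\<in>carrier R. if a \<otimes> a = c then 1 else 0)"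
  proof (rule sum.cong[OF refl])
    fix a assume a: "a \<in> carrier R"
    have y0: "(\<lambda>_. undefined) \<in> fvecs R 0" unfolding fvecs_0 by simp
    have "dot 1 ((\<lambda>_. undefined)(0 := a)) ((\<lambda>_. undefined)(0 := a)) = dot 0 (\<lambda>_. undefined) (\<lambda>_. undefined) \<oplus> a \<otimes> a"
      using dot_upd[OF y0 y0 a a] by simp
    also have "\<dots> = a \<otimes> a" using a unfolding dot_def by simp
    finally have h: "dot 1 ((\<lambda>_. undefined)(0 := a)) ((\<lambda>_. undefined)(0 := a)) = a \<otimes> a" .
    have "{y \<in> fvecs R 0. dot 1 (y(0 := a)) (y(0 := a)) = c} = (if a \<otimes> a = c then {\<lambda>_. undefined} else {})"
      unfolding fvecs_0 using h by auto
    thus "card {y \<in> fvecs R 0. dot 1 (y(0 := a)) (y(0 := a)) = c} = (if a \<otimes> a = c then 1 else 0)"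
      by simp
  qed
  also have "\<dots> = card {a \<in> carrier R. a \<otimes> a = c}"
    using fin by (simp add: sum.If_cases) (metis Collect_conj_eq Collect_mem_eq)
  finally show ?thesis .
qed

lemma sphere_count_1_zero: "sphere_count 1 \<zero> = 1"
proof -
  have "{a \<in> carrier R. a \<otimes> a = \<zero>} = {\<zero>}" using integral by auto
  thus ?thesis using sphere_count_1 by simp
qed

lemma sphere_count_1_square: assumes s: "s \<in> carrier R" "s \<noteq> \<zero>" shows "sphere_count 1 (s \<otimes> s) = 2"
proof -
  have "{a \<in> carrier R. a \<otimes> a = s \<otimes> s} = {s, \<ominus> s}"
  proof (intro equalityI subsetI)
    fix a assume "a \<in> {a \<in> carrier R. a \<otimes> a = s \<otimes> s}"
    thus "a \<in> {s, \<ominus> s}" using square_eq_squareD[of a s] s by auto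
  next
    fix a assume "a \<in> {s, \<ominus> s}"
    moreover have "\<ominus> s \<otimes> \<ominus> s = s \<otimes> s" using s by algebra
    ultimately show "a \<in> {a \<in> carrier R. a \<otimes> a = s \<otimes> s}" using s by auto
  qed
  thus ?thesis using sphere_count_1 minus_ne_self[OF s] by simp
qed

lemma sphere_count_odd_zero: "real (sphere_count (2*j+1) \<zero>) = real q ^ (2*j)"
proof (induction j)
  case 0
  then show ?case using sphere_count_1_zero by simp
next
  case (Suc j)
  have "real (sphere_count (Suc (Suc (2*j+1))) \<zero>) = (real q + 1) * real q ^ (2*j+1) - real q * real (sphere_count (2*j+1) \<zero>)"
    by (rule sphere_count_rec) simp
  also have "\<dots> = real q ^ (2 * Suc j)" using Suc.IH by (simp add: algebra_simps)
  finally show ?case by simp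
qed

lemma sphere_count_odd_square: assumes s: "s \<in> carrier R" "s \<noteq> \<zero>"
  shows "real (sphere_count (2*j+1) (s \<otimes> s)) = real q ^ (2*j) + (- real q) ^ j"
proof (induction j)
  case 0
  then show ?case using sphere_count_1_square[OF s] by simp
next
  case (Suc j)
  have "real (sphere_count (Suc (Suc (2*j+1))) (s \<otimes> s)) = (real q + 1) * real q ^ (2*j+1) - real q * real (sphere_count (2*j+1) (s \<otimes> s))"
    by (rule sphere_count_rec) (use s in simp)
  also have "\<dots> = real q ^ (2 * Suc j) + (- real q) ^ Suc j" using Suc.IH by (simp add: algebra_simps)
  finally show ?case by simp
qed

definition null_perp_count :: "nat \<Rightarrow> (nat \<Rightarrow> 'a) \<Rightarrow> nat" where
  "null_perp_count n w = card {x \<in> fvecs R n. dot n x x = \<zero> \<and> dot n x w = \<zero>}"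

definition reflect :: "nat \<Rightarrow> (nat \<Rightarrow> 'a) \<Rightarrow> (nat \<Rightarrow> 'a) \<Rightarrow> (nat \<Rightarrow> 'a)" where
  "reflect n u x = vadd_smult n x (\<ominus> (dot n x u \<otimes> ((\<one> \<oplus> \<one>) \<otimes> inv (dot n u u)))) u"

lemma reflect_coeff:
  assumes "Qu \<in> carrier R" "Qu \<noteq> \<zero>"
  shows "((\<one> \<oplus> \<one>) \<otimes> inv Qu) \<in> carrier R" "((\<one> \<oplus> \<one>) \<otimes> inv Qu) \<otimes> Qu = \<one> \<oplus> \<one>"
proof -
  have i: "inv Qu \<in> carrier R" "inv Qu \<otimes> Qu = \<one>" using assms field_Units by auto
  show "((\<one> \<oplus> \<one>) \<otimes> inv Qu) \<in> carrier R" using i by simp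
  have "((\<one> \<oplus> \<one>) \<otimes> inv Qu) \<otimes> Qu = (\<one> \<oplus> \<one>) \<otimes> (inv Qu \<otimes> Qu)"
    using i assms by (simp add: m_assoc)
  thus "((\<one> \<oplus> \<one>) \<otimes> inv Qu) \<otimes> Qu = \<one> \<oplus> \<one>" using i by simp
qed

lemma reflect_fvecs: "u \<in> fvecs R n \<Longrightarrow> x \<in> fvecs R n \<Longrightarrow> dot n u u \<noteq> \<zero> \<Longrightarrow> reflect n u x \<in> fvecs R n"
  unfolding reflect_def using reflect_coeff[of "dot n u u"] dot_closed by (intro vadd_smult_fvecs) auto

lemma dot_reflect:
  assumes u: "u \<in> fvecs R n" and x: "x \<in> fvecs R n" and y: "y \<in> fvecs R n" and Qu: "dot n u u \<noteq> \<zero>"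
  shows "dot n (reflect n u x) (reflect n u y) = dot n x y"
proof -
  define k where "k = (\<one> \<oplus> \<one>) \<otimes> inv (dot n u u)"
  have k: "k \<in> carrier R" "k \<otimes> dot n u u = \<one> \<oplus> \<one>" using reflect_coeff[OF dot_closed[OF u u] Qu] k_def by auto
  define bx where "bx = dot n x u"
  define by' where "by' = dot n y u"
  have cl: "bx \<in> carrier R" "by' \<in> carrier R" "dot n u u \<in> carrier R" "dot n x y \<in> carrier R"
    using dot_closed u x y bx_def by'_def by auto
  have cx: "\<ominus> (bx \<otimes> k) \<in> carrier R" and cy: "\<ominus> (by' \<otimes> k) \<in> carrier R" using cl k by auto
  have rx: "reflect n u x = vadd_smult n x (\<ominus> (bx \<otimes> k)) u" unfolding reflect_def bx_def k_def ..
  have ry: "reflect n u y = vadd_smult n y (\<ominus> (by' \<otimes> k)) u" unfolding reflect_def by'_def k_def ..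
  have lyV: "vadd_smult n y (\<ominus> (by' \<otimes> k)) u \<in> fvecs R n" using vadd_smult_fvecs[OF y u cy] .
  have "dot n (reflect n u x) (reflect n u y) = dot n x (vadd_smult n y (\<ominus> (by' \<otimes> k)) u) \<oplus> (\<ominus> (bx \<otimes> k)) \<otimes> dot n u (vadd_smult n y (\<ominus> (by' \<otimes> k)) u)"
    unfolding rx ry by (rule dot_vadd_smult_left[OF x u lyV cx])
  also have "dot n x (vadd_smult n y (\<ominus> (by' \<otimes> k)) u) = dot n x y \<oplus> (\<ominus> (by' \<otimes> k)) \<otimes> bx"
    using dot_vadd_smult_right[OF y u x cy] bx_def by simp
  also have "dot n u (vadd_smult n y (\<ominus> (by' \<otimes> k)) u) = by' \<oplus> (\<ominus> (by' \<otimes> k)) \<otimes> dot n u u"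
    using dot_vadd_smult_right[OF y u u cy] by'_def dot_comm[OF u y] by simp
  also have "dot n x y \<oplus> (\<ominus> (by' \<otimes> k)) \<otimes> bx \<oplus> (\<ominus> (bx \<otimes> k)) \<otimes> (by' \<oplus> (\<ominus> (by' \<otimes> k)) \<otimes> dot n u u)
      = dot n x y \<oplus> (bx \<otimes> by' \<otimes> k) \<otimes> (k \<otimes> dot n u u \<ominus> (\<one> \<oplus> \<one>))"
    using cl k by algebra
  also have "k \<otimes> dot n u u \<ominus> (\<one> \<oplus> \<one>) = \<zero>" using k by simp
  finally show ?thesis using cl k by simp
qed

lemma reflect_reflect:
  assumes u: "u \<in> fvecs R n" and x: "x \<in> fvecs R n" and Qu: "dot n u u \<noteq> \<zero>"
  shows "reflect n u (reflect n u x) = x"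
proof -
  define k where "k = (\<one> \<oplus> \<one>) \<otimes> inv (dot n u u)"
  have k: "k \<in> carrier R" "k \<otimes> dot n u u = \<one> \<oplus> \<one>" using reflect_coeff[OF dot_closed[OF u u] Qu] k_def by auto
  define bx where "bx = dot n x u"
  have cl: "bx \<in> carrier R" "dot n u u \<in> carrier R" using dot_closed u x bx_def by auto
  have cx: "\<ominus> (bx \<otimes> k) \<in> carrier R" using cl k by auto
  have rx: "reflect n u x = vadd_smult n x (\<ominus> (bx \<otimes> k)) u" unfolding reflect_def bx_def k_def ..
  have rV: "reflect n u x \<in> fvecs R n" using reflect_fvecs[OF u x Qu] .
  have "dot n (reflect n u x) u = bx \<oplus> (\<ominus> (bx \<otimes> k)) \<otimes> dot n u u"
    unfolding rx using dot_vadd_smult_left[OF x u u cx] bx_def by simp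
  also have "\<dots> = bx \<ominus> bx \<otimes> (k \<otimes> dot n u u)" using cl k by algebra
  also have "\<dots> = bx \<ominus> bx \<otimes> (\<one> \<oplus> \<one>)" using k(2) by (rule arg_cong)
  also have "\<dots> = \<ominus> bx" using cl by algebra
  finally have b2: "dot n (reflect n u x) u = \<ominus> bx" .
  have rr: "reflect n u (reflect n u x) = vadd_smult n (reflect n u x) (\<ominus> (\<ominus> bx \<otimes> k)) u"
    unfolding reflect_def[of n u "reflect n u x"] b2 k_def ..
  show ?thesis
  proof (rule fvecs_eqI)
    show "reflect n u (reflect n u x) \<in> fvecs R n" using reflect_fvecs[OF u rV Qu] .
    show "x \<in> fvecs R n" by fact
    fix i assume i: "i < n"
    have ui: "u i \<in> carrier R" and xi: "x i \<in> carrier R" using u x i fvecs_carrier by auto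
    have "reflect n u (reflect n u x) i = reflect n u x i \<oplus> (\<ominus> (\<ominus> bx \<otimes> k)) \<otimes> u i"
      unfolding rr using i by (rule vadd_smult_apply)
    moreover have "reflect n u x i = x i \<oplus> (\<ominus> (bx \<otimes> k)) \<otimes> u i"
      unfolding rx using i by (rule vadd_smult_apply)
    ultimately have "reflect n u (reflect n u x) i = (x i \<oplus> (\<ominus> (bx \<otimes> k)) \<otimes> u i) \<oplus> (\<ominus> (\<ominus> bx \<otimes> k)) \<otimes> u i"
      by simp
    also have "\<dots> = x i" using ui xi cl k by algebra
    finally show "reflect n u (reflect n u x) i = x i" .
  qed
qed

lemma null_perp_count_reflect:
  assumes u: "u \<in> fvecs R n" and w: "w \<in> fvecs R n" and Qu: "dot n u u \<noteq> \<zero>"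
  shows "null_perp_count n (reflect n u w) = null_perp_count n w"
proof -
  let ?A = "{x \<in> fvecs R n. dot n x x = \<zero> \<and> dot n x w = \<zero>}"
  let ?B = "{x \<in> fvecs R n. dot n x x = \<zero> \<and> dot n x (reflect n u w) = \<zero>}"
  have bij: "bij_betw (reflect n u) ?A ?B"
  proof (rule bij_betw_byWitness[where f'="reflect n u"])
    show "\<forall>x\<in>?A. reflect n u (reflect n u x) = x" using reflect_reflect[OF u _ Qu] by simp
    show "\<forall>x\<in>?B. reflect n u (reflect n u x) = x" using reflect_reflect[OF u _ Qu] by simp
    show "reflect n u ` ?A \<subseteq> ?B"
    proof
      fix y assume "y \<in> reflect n u ` ?A"
      then obtain x where x: "x \<in> ?A" and y: "y = reflect n u x" by (rule imageE)
      have xV: "x \<in> fvecs R n" using x by simp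
      show "y \<in> ?B" using x y reflect_fvecs[OF u xV Qu] dot_reflect[OF u xV xV Qu] dot_reflect[OF u xV w Qu] by simp
    qed
    show "reflect n u ` ?B \<subseteq> ?A"
    proof
      fix y assume "y \<in> reflect n u ` ?B"
      then obtain x where x: "x \<in> ?B" and y: "y = reflect n u x" by (rule imageE)
      have xV: "x \<in> fvecs R n" using x by simp
      have rw: "reflect n u w \<in> fvecs R n" using reflect_fvecs[OF u w Qu] .
      have "dot n y w = dot n (reflect n u x) (reflect n u (reflect n u w))" using y reflect_reflect[OF u w Qu] by simp
      also have "\<dots> = dot n x (reflect n u w)" using dot_reflect[OF u xV rw Qu] .
      finally show "y \<in> ?A" using x y reflect_fvecs[OF u xV Qu] dot_reflect[OF u xV xV Qu] by simp
    qed
  qed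
  show ?thesis unfolding null_perp_count_def using bij_betw_same_card[OF bij] by simp
qed

lemma reflect_diff:
  assumes v: "v \<in> fvecs R n" and w: "w \<in> fvecs R n" and Q: "dot n v v = dot n w w"
    and D: "dot n v v \<ominus> dot n v w \<noteq> \<zero>"
  defines "u \<equiv> vadd_smult n v (\<ominus> \<one>) w"
  shows "dot n u u \<noteq> \<zero>" and "reflect n u v = w"
proof -
  have m1: "\<ominus> \<one> \<in> carrier R" by simp
  have uV: "u \<in> fvecs R n" unfolding u_def using vadd_smult_fvecs[OF v w m1] .
  define Dv where "Dv = dot n v v \<ominus> dot n v w"
  have cl: "dot n v v \<in> carrier R" "dot n v w \<in> carrier R" "dot n w w \<in> carrier R"
    using dot_closed v w by auto
  have Dc: "Dv \<in> carrier R" using cl Dv_def by simp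
  have Bvu: "dot n v u = Dv"
    unfolding u_def Dv_def using dot_vadd_smult_right[OF v w v m1] cl by (simp add: a_minus_def l_minus)
  have "dot n u u = dot n v v \<oplus> (\<one> \<oplus> \<one>) \<otimes> \<ominus> \<one> \<otimes> dot n v w \<oplus> \<ominus> \<one> \<otimes> \<ominus> \<one> \<otimes> dot n w w"
    unfolding u_def by (rule dot_vadd_smult_self[OF v w m1])
  also have "\<dots> = (\<one> \<oplus> \<one>) \<otimes> Dv" using cl Q Dv_def by simp algebra
  finally have Qu: "dot n u u = (\<one> \<oplus> \<one>) \<otimes> Dv" .
  show Qu0: "dot n u u \<noteq> \<zero>" using Qu integral[of "\<one> \<oplus> \<one>" Dv] two_nonzero D Dv_def Dc by auto
  define k where "k = (\<one> \<oplus> \<one>) \<otimes> inv (dot n u u)"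
  have k: "k \<in> carrier R" "k \<otimes> dot n u u = \<one> \<oplus> \<one>"
    using reflect_coeff[OF dot_closed[OF uV uV] Qu0] k_def by auto
  have "(\<one> \<oplus> \<one>) \<otimes> (Dv \<otimes> k) = k \<otimes> dot n u u" using Qu k Dc by simp algebra
  also have "\<dots> = (\<one> \<oplus> \<one>) \<otimes> \<one>" using k by simp
  finally have Dk: "Dv \<otimes> k = \<one>" using m_lcancel[of "\<one> \<oplus> \<one>" "Dv \<otimes> k" \<one>] two_nonzero k Dc by simp
  show "reflect n u v = w"
  proof (rule fvecs_eqI)
    show "reflect n u v \<in> fvecs R n" using reflect_fvecs[OF uV v Qu0] .
    show "w \<in> fvecs R n" by fact
    fix i assume i: "i < n"
    have vi: "v i \<in> carrier R" and wi: "w i \<in> carrier R" using v w i fvecs_carrier by auto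
    have "reflect n u v i = v i \<oplus> (\<ominus> (dot n v u \<otimes> k)) \<otimes> u i"
      unfolding reflect_def k_def using i by (rule vadd_smult_apply)
    also have "u i = v i \<oplus> \<ominus> \<one> \<otimes> w i" unfolding u_def using i by (rule vadd_smult_apply)
    also have "dot n v u \<otimes> k = \<one>" using Bvu Dk by simp
    also have "v i \<oplus> \<ominus> \<one> \<otimes> (v i \<oplus> \<ominus> \<one> \<otimes> w i) = w i" using vi wi by algebra
    finally show "reflect n u v i = w i" .
  qed
qed

lemma null_perp_count_eq_reflectable:
  assumes v: "v \<in> fvecs R n" and w: "w \<in> fvecs R n" and Q: "dot n v v = dot n w w"
    and D: "dot n v v \<ominus> dot n v w \<noteq> \<zero>"
  shows "null_perp_count n v = null_perp_count n w"
  using null_perp_count_reflect[OF _ v reflect_diff(1)[OF v w Q D]] reflect_diff(2)[OF v w Q D]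
    vadd_smult_fvecs[OF v w] by simp

lemma null_perp_count_neg: assumes w: "w \<in> fvecs R n" shows "null_perp_count n (vadd_smult n (zero_vec n) (\<ominus> \<one>) w) = null_perp_count n w"
proof -
  have m1: "\<ominus> \<one> \<in> carrier R" by simp
  have "\<And>x. x \<in> fvecs R n \<Longrightarrow> dot n x (vadd_smult n (zero_vec n) (\<ominus> \<one>) w) = \<ominus> dot n x w"
  proof -
    fix x assume x: "x \<in> fvecs R n"
    have "dot n x (vadd_smult n (zero_vec n) (\<ominus> \<one>) w) = dot n x (zero_vec n) \<oplus> \<ominus> \<one> \<otimes> dot n x w"
      by (rule dot_vadd_smult_right[OF zero_vec_fvecs w x m1])
    thus "dot n x (vadd_smult n (zero_vec n) (\<ominus> \<one>) w) = \<ominus> dot n x w" using dot_zero_vec[OF x] dot_closed[OF x w] by (simp add: l_minus)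
  qed
  hence "{x \<in> fvecs R n. dot n x x = \<zero> \<and> dot n x (vadd_smult n (zero_vec n) (\<ominus> \<one>) w) = \<zero>} = {x \<in> fvecs R n. dot n x x = \<zero> \<and> dot n x w = \<zero>}"
    using dot_closed[OF _ w] by auto
  thus ?thesis unfolding null_perp_count_def by simp
qed

lemma null_perp_count_eq_anisotropic:
  assumes v: "v \<in> fvecs R n" and w: "w \<in> fvecs R n" and Q: "dot n v v = dot n w w" and a0: "dot n v v \<noteq> \<zero>"
  shows "null_perp_count n v = null_perp_count n w"
proof (cases "dot n v v \<ominus> dot n v w = \<zero>")
  case False
  then show ?thesis using null_perp_count_eq_reflectable[OF v w Q] by simp
next
  case True
  define w1 where "w1 = vadd_smult n (zero_vec n) (\<ominus> \<one>) w"
  have m1: "\<ominus> \<one> \<in> carrier R" by simp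
  have w1V: "w1 \<in> fvecs R n" unfolding w1_def using vadd_smult_fvecs[OF zero_vec_fvecs w m1] .
  have cl: "dot n v v \<in> carrier R" "dot n v w \<in> carrier R" using dot_closed v w by auto
  have Bw: "dot n v w = dot n v v" using True cl by (metis r_right_minus_eq)
  have "dot n v w1 = dot n v (zero_vec n) \<oplus> \<ominus> \<one> \<otimes> dot n v w"
    unfolding w1_def by (rule dot_vadd_smult_right[OF zero_vec_fvecs w v m1])
  hence Bw1: "dot n v w1 = \<ominus> dot n v v" using dot_zero_vec[OF v] Bw cl by (simp add: l_minus)
  have Q1: "dot n v v = dot n w1 w1" using dot_neg_self[OF w] Q w1_def by simp
  have "dot n v v \<ominus> dot n v w1 = (\<one> \<oplus> \<one>) \<otimes> dot n v v" using Bw1 cl by simp algebra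
  hence "dot n v v \<ominus> dot n v w1 \<noteq> \<zero>" using integral[of "\<one> \<oplus> \<one>" "dot n v v"] two_nonzero a0 cl by auto
  hence "null_perp_count n v = null_perp_count n w1" using null_perp_count_eq_reflectable[OF v w1V Q1] by simp
  also have "\<dots> = null_perp_count n w" unfolding w1_def by (rule null_perp_count_neg[OF w])
  finally show ?thesis .
qed

lemma null_perp_count_eq_isotropic_nonorth:
  assumes a: "a \<in> fvecs R n" and b: "b \<in> fvecs R n" and Qa: "dot n a a = \<zero>" and Qb: "dot n b b = \<zero>"
    and B: "dot n a b \<noteq> \<zero>"
  shows "null_perp_count n a = null_perp_count n b"
proof (rule null_perp_count_eq_reflectable[OF a b])
  show "dot n a a = dot n b b" using Qa Qb by simp
  show "dot n a a \<ominus> dot n a b \<noteq> \<zero>" using Qa B dot_closed[OF a b]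
    by (metis a_minus_def add.inv_closed add.l_inv_ex l_zero minus_minus minus_zero)
qed

lemma exists_ne_two: "\<exists>l\<in>carrier R. l \<noteq> a \<and> l \<noteq> b"
proof -
  have "\<not> carrier R \<subseteq> {a, b}"
  proof
    assume "carrier R \<subseteq> {a, b}"
    then have "q \<le> card {a, b}" by (intro card_mono) auto
    also have "\<dots> \<le> 2" by (simp add: card_insert_le_m1)
    finally show False using q_ge_3 by simp
  qed
  then show ?thesis by blast
qed

lemma exists_dot_nonzero_both:
  assumes v: "v \<in> fvecs R n" and w: "w \<in> fvecs R n"
    and i: "i < n" and vi: "v i \<noteq> \<zero>" and wl: "w (n - 1) = \<one>"
  shows "\<exists>z\<in>fvecs R n. dot n z v \<noteq> \<zero> \<and> dot n z w \<noteq> \<zero>"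
proof -
  have n1: "n - 1 < n" using i by simp
  have vic: "v i \<in> carrier R" and vlc: "v (n - 1) \<in> carrier R" and wic: "w i \<in> carrier R"
    using v w i n1 fvecs_carrier by auto
  obtain l where l: "l \<in> carrier R" "l \<noteq> \<ominus> (w i)" "l \<noteq> \<ominus> (v i) \<otimes> inv (v (n - 1))"
    using exists_ne_two by blast
  define z where "z = vadd_smult n (unit_vec n i) l (unit_vec n (n - 1))"
  have zV: "z \<in> fvecs R n" unfolding z_def using vadd_smult_fvecs[OF unit_vec_fvecs unit_vec_fvecs l(1)] .
  have dot_z: "dot n z y = y i \<oplus> l \<otimes> y (n - 1)" if y: "y \<in> fvecs R n" for y
    unfolding z_def using dot_vadd_smult_left[OF unit_vec_fvecs unit_vec_fvecs y l(1)]
      dot_unit_vec[OF y i] dot_unit_vec[OF y n1] by simp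
  have "w i \<oplus> l \<noteq> \<zero>" using add_eq_zero_imp_eq_minus wic l by blast
  then have "dot n z w \<noteq> \<zero>" using dot_z[OF w] wl l by simp
  moreover have "v i \<oplus> l \<otimes> v (n - 1) \<noteq> \<zero>"
  proof
    assume h: "v i \<oplus> l \<otimes> v (n - 1) = \<zero>"
    show False
    proof (cases "v (n - 1) = \<zero>")
      case True
      then show False using h vi vic l by simp
    next
      case False
      have iv: "inv (v (n - 1)) \<in> carrier R" "v (n - 1) \<otimes> inv (v (n - 1)) = \<one>"
        using False vlc field_Units by auto
      have "l \<otimes> v (n - 1) = \<ominus> (v i)" using add_eq_zero_imp_eq_minus[OF vic _ h] l vlc by simp
      then have "l \<otimes> v (n - 1) \<otimes> inv (v (n - 1)) = \<ominus> (v i) \<otimes> inv (v (n - 1))" by simp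
      then have "l = \<ominus> (v i) \<otimes> inv (v (n - 1))" using iv l vlc by (simp add: m_assoc)
      then show False using l by simp
    qed
  qed
  then have "dot n z v \<noteq> \<zero>" using dot_z[OF v] by simp
  ultimately show ?thesis using zV by blast
qed

lemma exists_isotropic_shift:
  assumes z: "z \<in> fvecs R n" and v: "v \<in> fvecs R n" and Qv: "dot n v v = \<zero>"
    and zv: "dot n z v \<noteq> \<zero>"
  obtains u where "u \<in> fvecs R n" "dot n u u = \<zero>" "dot n u v = dot n z v"
    "\<And>w. w \<in> fvecs R n \<Longrightarrow> dot n v w = \<zero> \<Longrightarrow> dot n u w = dot n z w"
proof
  have clz: "dot n z z \<in> carrier R" "dot n z v \<in> carrier R" using dot_closed z v by auto
  define t where "t = (\<one> \<oplus> \<one>) \<otimes> dot n z v"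
  have "t \<in> carrier R" "t \<noteq> \<zero>" using integral[of "\<one> \<oplus> \<one>" "dot n z v"] two_nonzero zv clz t_def by auto
  then have it: "inv t \<in> carrier R" "inv t \<otimes> t = \<one>" using field_Units by auto
  define s where "s = \<ominus> (dot n z z \<otimes> inv t)"
  have s: "s \<in> carrier R" using s_def clz it by simp
  define u where "u = vadd_smult n z s v"
  show "u \<in> fvecs R n" unfolding u_def using vadd_smult_fvecs[OF z v s] .
  have "dot n u u = dot n z z \<oplus> (\<one> \<oplus> \<one>) \<otimes> s \<otimes> dot n z v \<oplus> s \<otimes> s \<otimes> dot n v v"
    unfolding u_def by (rule dot_vadd_smult_self[OF z v s])
  also have "\<dots> = dot n z z \<ominus> dot n z z \<otimes> (inv t \<otimes> t)"
    using clz it(1)[unfolded t_def] unfolding s_def t_def Qv by algebra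
  also have "\<dots> = \<zero>" using it clz by simp
  finally show "dot n u u = \<zero>" .
  show "dot n u v = dot n z v"
    unfolding u_def using dot_vadd_smult_left[OF z v v s] Qv clz s by simp
  show "dot n u w = dot n z w" if "w \<in> fvecs R n" "dot n v w = \<zero>" for w
    unfolding u_def using dot_vadd_smult_left[OF z v that(1) s] that dot_closed[OF z that(1)] s by simp
qed

\<comment> \<open>If \<open>v \<cdot> w = 0\<close>, pass through an isotropic vector that is orthogonal to neither.\<close>
lemma null_perp_count_eq_isotropic:
  assumes v: "v \<in> fvecs R n" and w: "w \<in> fvecs R n" and Qv: "dot n v v = \<zero>" and Qw: "dot n w w = \<zero>"
    and i: "i < n" and vi: "v i \<noteq> \<zero>" and wl: "w (n - 1) = \<one>"
  shows "null_perp_count n v = null_perp_count n w"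
proof (cases "dot n v w = \<zero>")
  case False
  then show ?thesis using null_perp_count_eq_isotropic_nonorth[OF v w Qv Qw] by simp
next
  case True
  obtain z where z: "z \<in> fvecs R n" "dot n z v \<noteq> \<zero>" "dot n z w \<noteq> \<zero>"
    using exists_dot_nonzero_both[OF v w i vi wl] by blast
  obtain u where u: "u \<in> fvecs R n" "dot n u u = \<zero>" "dot n u v = dot n z v" "dot n u w = dot n z w"
    using exists_isotropic_shift[OF z(1) v Qv z(2)] w True by metis
  have "null_perp_count n v = null_perp_count n u"
    using null_perp_count_eq_isotropic_nonorth[OF v u(1) Qv u(2)] dot_comm[OF v u(1)] u z by simp
  also have "\<dots> = null_perp_count n w"
    using null_perp_count_eq_isotropic_nonorth[OF u(1) w u(2) Qw] u z by simp
  finally show ?thesis .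
qed

lemma sum_carrier_eq_nonzero_const:
  fixes f :: "'a \<Rightarrow> real"
  assumes "\<And>a. a \<in> carrier R \<Longrightarrow> a \<noteq> \<zero> \<Longrightarrow> f a = K"
  shows "(\<Sum>a\<in>carrier R. f a) = f \<zero> + (real q - 1) * K"
proof -
  have "(\<Sum>a\<in>carrier R. f a) = f \<zero> + (\<Sum>a\<in>carrier R - {\<zero>}. f a)"
    using fin by (subst sum.remove[of _ \<zero>]) auto
  also have "(\<Sum>a\<in>carrier R - {\<zero>}. f a) = (\<Sum>a\<in>carrier R - {\<zero>}. K)"
    using assms by (intro sum.cong) auto
  finally show ?thesis using fin q_ge_3 by (simp add: card_Diff_singleton of_nat_diff)
qed

lemma sum_if_add_mult_eq_zero:
  fixes f :: "'a \<Rightarrow> 'c::comm_monoid_add"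
  assumes u: "u \<in> carrier R" and be: "\<beta> \<in> carrier R" "\<beta> \<noteq> \<zero>"
  shows "(\<Sum>b\<in>carrier R. if u \<oplus> b \<otimes> \<beta> = \<zero> then f b else 0) = f (\<ominus> u \<otimes> inv \<beta>)"
proof -
  have ib: "inv \<beta> \<in> carrier R" "\<beta> \<otimes> inv \<beta> = \<one>" using be field_Units by auto
  have "u \<oplus> b \<otimes> \<beta> = \<zero> \<longleftrightarrow> b = \<ominus> u \<otimes> inv \<beta>" if b: "b \<in> carrier R" for b
  proof
    assume "u \<oplus> b \<otimes> \<beta> = \<zero>"
    then have "b \<otimes> \<beta> = \<ominus> u" using add_eq_zero_imp_eq_minus u b be by simp
    then have "b \<otimes> \<beta> \<otimes> inv \<beta> = \<ominus> u \<otimes> inv \<beta>" by simp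
    then show "b = \<ominus> u \<otimes> inv \<beta>" using ib b be by (simp add: m_assoc)
  next
    assume "b = \<ominus> u \<otimes> inv \<beta>"
    moreover have "u \<oplus> (\<ominus> u \<otimes> inv \<beta>) \<otimes> \<beta> = u \<ominus> u \<otimes> (\<beta> \<otimes> inv \<beta>)"
      using u be ib(1) by algebra
    moreover have "u \<ominus> u \<otimes> (\<beta> \<otimes> inv \<beta>) = \<zero>"
      using u by (simp only: ib(2)) (simp add: r_right_minus_eq)
    ultimately show "u \<oplus> b \<otimes> \<beta> = \<zero>" by simp
  qed
  then have "(\<Sum>b\<in>carrier R. if u \<oplus> b \<otimes> \<beta> = \<zero> then f b else 0)
      = (\<Sum>b\<in>carrier R. if b = \<ominus> u \<otimes> inv \<beta> then f (\<ominus> u \<otimes> inv \<beta>) else 0)"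
    by (intro sum.cong) auto
  also have "\<dots> = f (\<ominus> u \<otimes> inv \<beta>)" using fin u ib by (simp add: sum.delta)
  finally show ?thesis .
qed

lemma sum_if_add_eq_zero:
  fixes f :: "'a \<Rightarrow> 'c::comm_monoid_add"
  assumes "u \<in> carrier R"
  shows "(\<Sum>c\<in>carrier R. if u \<oplus> c = \<zero> then f c else 0) = f (\<ominus> u)"
  using sum_if_add_mult_eq_zero[OF assms one_closed one_not_zero, of f] assms
  by (simp add: field_Units)

lemma sum_carrier_reindex_affine:
  fixes f :: "'a \<Rightarrow> 'c::comm_monoid_add"
  assumes be: "\<beta> \<in> carrier R" "\<beta> \<noteq> \<zero>" and ga: "\<gamma> \<in> carrier R"
  shows "(\<Sum>a\<in>carrier R. f (\<beta> \<otimes> a \<ominus> \<gamma>)) = (\<Sum>s\<in>carrier R. f s)"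
proof -
  have ib: "inv \<beta> \<in> carrier R" "\<beta> \<otimes> inv \<beta> = \<one>" "inv \<beta> \<otimes> \<beta> = \<one>" using be field_Units by auto
  have "\<beta> \<otimes> ((s \<oplus> \<gamma>) \<otimes> inv \<beta>) \<ominus> \<gamma> = s" if "s \<in> carrier R" for s
  proof -
    have "\<beta> \<otimes> ((s \<oplus> \<gamma>) \<otimes> inv \<beta>) \<ominus> \<gamma> = (s \<oplus> \<gamma>) \<otimes> (\<beta> \<otimes> inv \<beta>) \<ominus> \<gamma>"
      using that be ga ib(1) by algebra
    also have "\<dots> = (s \<oplus> \<gamma>) \<ominus> \<gamma>" using that ga by (simp only: ib(2)) simp
    also have "\<dots> = s" using that ga by algebra
    finally show ?thesis .
  qed
  moreover have "(\<beta> \<otimes> a \<ominus> \<gamma> \<oplus> \<gamma>) \<otimes> inv \<beta> = a" if "a \<in> carrier R" for a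
  proof -
    have "(\<beta> \<otimes> a \<ominus> \<gamma> \<oplus> \<gamma>) \<otimes> inv \<beta> = a \<otimes> (\<beta> \<otimes> inv \<beta>)" using that be ga ib(1) by algebra
    then show ?thesis using that ib by simp
  qed
  ultimately show ?thesis
    by (intro sum.reindex_bij_witness[where i="\<lambda>s. (s \<oplus> \<gamma>) \<otimes> inv \<beta>" and j="\<lambda>a. \<beta> \<otimes> a \<ominus> \<gamma>"])
      (use be ga ib in auto)
qed

definition aniso_rep :: "nat \<Rightarrow> 'a \<Rightarrow> 'a \<Rightarrow> (nat \<Rightarrow> 'a)" where
  "aniso_rep m \<alpha> \<beta> = ((zero_vec m)(m := \<alpha>))(Suc m := \<beta>)"

lemma aniso_rep_fvecs: "\<alpha> \<in> carrier R \<Longrightarrow> \<beta> \<in> carrier R \<Longrightarrow> aniso_rep m \<alpha> \<beta> \<in> fvecs R (Suc (Suc m))"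
  unfolding aniso_rep_def using fvecs_upd zero_vec_fvecs by simp

lemma dot_aniso_rep: "\<alpha> \<in> carrier R \<Longrightarrow> \<beta> \<in> carrier R \<Longrightarrow> dot (Suc (Suc m)) (aniso_rep m \<alpha> \<beta>) (aniso_rep m \<alpha> \<beta>) = \<alpha> \<otimes> \<alpha> \<oplus> \<beta> \<otimes> \<beta>"
  unfolding aniso_rep_def using dot_upd2[OF zero_vec_fvecs zero_vec_fvecs] dot_zero_vec[OF zero_vec_fvecs] by simp

lemma null_perp_count_aniso_rep_sum:
  assumes al: "\<alpha> \<in> carrier R" and be: "\<beta> \<in> carrier R"
  shows "null_perp_count (Suc (Suc m)) (aniso_rep m \<alpha> \<beta>) = (\<Sum>b\<in>carrier R. \<Sum>a\<in>carrier R.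
            if a \<otimes> \<alpha> \<oplus> b \<otimes> \<beta> = \<zero> then sphere_count m (\<ominus> (a \<otimes> a \<oplus> b \<otimes> b)) else 0)"
  unfolding null_perp_count_def card_fvecs_Suc_Suc
proof (intro sum.cong[OF refl])
  fix a b assume b: "b \<in> carrier R" and a: "a \<in> carrier R"
  have "{z \<in> fvecs R m. dot (Suc (Suc m)) ((z(m := a))(Suc m := b)) ((z(m := a))(Suc m := b)) = \<zero> \<and>
                   dot (Suc (Suc m)) ((z(m := a))(Suc m := b)) (aniso_rep m \<alpha> \<beta>) = \<zero>}
      = {z \<in> fvecs R m. dot m z z = \<ominus> (a \<otimes> a \<oplus> b \<otimes> b) \<and> a \<otimes> \<alpha> \<oplus> b \<otimes> \<beta> = \<zero>}"
  proof (rule Collect_cong)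
    fix z
    show "(z \<in> fvecs R m \<and> dot (Suc (Suc m)) ((z(m := a))(Suc m := b)) ((z(m := a))(Suc m := b)) = \<zero> \<and>
                   dot (Suc (Suc m)) ((z(m := a))(Suc m := b)) (aniso_rep m \<alpha> \<beta>) = \<zero>) =
          (z \<in> fvecs R m \<and> dot m z z = \<ominus> (a \<otimes> a \<oplus> b \<otimes> b) \<and> a \<otimes> \<alpha> \<oplus> b \<otimes> \<beta> = \<zero>)"
    proof (cases "z \<in> fvecs R m")
      case True
      have zz: "dot m z z \<in> carrier R" using dot_closed[OF True True] .
      have e1: "dot (Suc (Suc m)) ((z(m := a))(Suc m := b)) ((z(m := a))(Suc m := b)) = dot m z z \<oplus> (a \<otimes> a \<oplus> b \<otimes> b)"
        using dot_upd2[OF True True a a b b] zz a b by (simp add: a_assoc)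
      have e2: "dot (Suc (Suc m)) ((z(m := a))(Suc m := b)) (aniso_rep m \<alpha> \<beta>) = a \<otimes> \<alpha> \<oplus> b \<otimes> \<beta>"
        unfolding aniso_rep_def using dot_upd2[OF True zero_vec_fvecs a al b be] dot_zero_vec[OF True] a b al be by simp
      have "(dot m z z \<oplus> (a \<otimes> a \<oplus> b \<otimes> b) = \<zero>) = (dot m z z = \<zero> \<ominus> (a \<otimes> a \<oplus> b \<otimes> b))"
        using add_eq_iff_eq_minus[OF zz, of "a \<otimes> a \<oplus> b \<otimes> b" \<zero>] a b by simp
      also have "\<zero> \<ominus> (a \<otimes> a \<oplus> b \<otimes> b) = \<ominus> (a \<otimes> a \<oplus> b \<otimes> b)" using a b by algebra
      finally show ?thesis using e1 e2 True by simp
    qed simp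
  qed
  thus "card {z \<in> fvecs R m. dot (Suc (Suc m)) ((z(m := a))(Suc m := b)) ((z(m := a))(Suc m := b)) = \<zero> \<and>
                   dot (Suc (Suc m)) ((z(m := a))(Suc m := b)) (aniso_rep m \<alpha> \<beta>) = \<zero>} =
        (if a \<otimes> \<alpha> \<oplus> b \<otimes> \<beta> = \<zero> then sphere_count m (\<ominus> (a \<otimes> a \<oplus> b \<otimes> b)) else 0)"
    unfolding sphere_count_def by simp
qed

lemma null_perp_count_aniso_rep:
  assumes al: "\<alpha> \<in> carrier R" and be: "\<beta> \<in> carrier R" and b0: "\<beta> \<noteq> \<zero>"
  shows "real (null_perp_count (Suc (Suc (2*j+2))) (aniso_rep (2*j+2) \<alpha> \<beta>)) = real q ^ (2*j+2)"
proof -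
  let ?m = "2*j+2"
  define c where "c a = \<ominus> (a \<otimes> \<alpha>) \<otimes> inv \<beta>" for a
  have c: "c a \<in> carrier R" if "a \<in> carrier R" for a
    using that al be b0 field_Units unfolding c_def by auto
  have "null_perp_count (Suc (Suc ?m)) (aniso_rep ?m \<alpha> \<beta>)
      = (\<Sum>a\<in>carrier R. sphere_count ?m (\<ominus> (a \<otimes> a \<oplus> c a \<otimes> c a)))"
    unfolding null_perp_count_aniso_rep_sum[OF al be] c_def
    by (subst sum.swap) (intro sum.cong refl sum_if_add_mult_eq_zero; use al be b0 in simp)
  also have "real \<dots> = real (sphere_count ?m (\<ominus> (\<zero> \<otimes> \<zero> \<oplus> c \<zero> \<otimes> c \<zero>)))
      + (real q - 1) * (real q ^ (2*j+1) + (- real q) ^ j)"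
    unfolding of_nat_sum
  proof (rule sum_carrier_eq_nonzero_const)
    fix a assume a: "a \<in> carrier R" "a \<noteq> \<zero>"
    then have "a \<otimes> a \<oplus> c a \<otimes> c a \<noteq> \<zero>" using sum_two_squares_eq_zeroD c by blast
    then have "\<ominus> (a \<otimes> a \<oplus> c a \<otimes> c a) \<noteq> \<zero>" using a c by (metis add.inv_eq_1_iff a_closed m_closed)
    then show "real (sphere_count ?m (\<ominus> (a \<otimes> a \<oplus> c a \<otimes> c a))) = real q ^ (2*j+1) + (- real q) ^ j"
      using sphere_count_even[of "\<ominus> (a \<otimes> a \<oplus> c a \<otimes> c a)" j] a c by simp
  qed
  also have "c \<zero> = \<zero>" unfolding c_def using al be b0 field_Units by auto
  also have "real (sphere_count ?m (\<ominus> (\<zero> \<otimes> \<zero> \<oplus> \<zero> \<otimes> \<zero>))) = real q ^ (2*j+1) + (- real q) ^ j * (1 - real q)"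
    using sphere_count_even[of \<zero> j] by simp
  finally show ?thesis by (simp add: algebra_simps)
qed

definition iso_rep :: "nat \<Rightarrow> 'a \<Rightarrow> 'a \<Rightarrow> (nat \<Rightarrow> 'a)" where
  "iso_rep m \<alpha> \<beta> = (((zero_vec m)(m := \<alpha>))(Suc m := \<beta>))(Suc (Suc m) := \<one>)"

lemma iso_rep_fvecs: "\<alpha> \<in> carrier R \<Longrightarrow> \<beta> \<in> carrier R \<Longrightarrow> iso_rep m \<alpha> \<beta> \<in> fvecs R (Suc (Suc (Suc m)))"
  unfolding iso_rep_def using fvecs_upd zero_vec_fvecs by simp

lemma dot_iso_rep: "\<alpha> \<in> carrier R \<Longrightarrow> \<beta> \<in> carrier R \<Longrightarrow>
   dot (Suc (Suc (Suc m))) (iso_rep m \<alpha> \<beta>) (iso_rep m \<alpha> \<beta>) = (\<alpha> \<otimes> \<alpha> \<oplus> \<beta> \<otimes> \<beta>) \<oplus> \<one>"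
  unfolding iso_rep_def using dot_upd3[OF zero_vec_fvecs zero_vec_fvecs] dot_zero_vec[OF zero_vec_fvecs] by simp

lemma iso_rep_last: "iso_rep m \<alpha> \<beta> (Suc (Suc (Suc m)) - 1) = \<one>"
  unfolding iso_rep_def by simp

lemma null_perp_count_iso_rep_sum:
  assumes al: "\<alpha> \<in> carrier R" and be: "\<beta> \<in> carrier R"
  shows "null_perp_count (Suc (Suc (Suc m))) (iso_rep m \<alpha> \<beta>) = (\<Sum>c\<in>carrier R. \<Sum>b\<in>carrier R. \<Sum>a\<in>carrier R.
            if (a \<otimes> \<alpha> \<oplus> b \<otimes> \<beta>) \<oplus> c = \<zero> then sphere_count m (\<ominus> ((a \<otimes> a \<oplus> b \<otimes> b) \<oplus> c \<otimes> c)) else 0)"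
  unfolding null_perp_count_def card_fvecs_Suc_Suc_Suc
proof (intro sum.cong[OF refl])
  fix a b c assume c: "c \<in> carrier R" and b: "b \<in> carrier R" and a: "a \<in> carrier R"
  let ?x = "\<lambda>z. ((z(m := a))(Suc m := b))(Suc (Suc m) := c)"
  have "{z \<in> fvecs R m. dot (Suc (Suc (Suc m))) (?x z) (?x z) = \<zero> \<and> dot (Suc (Suc (Suc m))) (?x z) (iso_rep m \<alpha> \<beta>) = \<zero>}
      = {z \<in> fvecs R m. dot m z z = \<ominus> ((a \<otimes> a \<oplus> b \<otimes> b) \<oplus> c \<otimes> c) \<and> (a \<otimes> \<alpha> \<oplus> b \<otimes> \<beta>) \<oplus> c = \<zero>}"
  proof (rule Collect_cong)
    fix z
    show "(z \<in> fvecs R m \<and> dot (Suc (Suc (Suc m))) (?x z) (?x z) = \<zero> \<and> dot (Suc (Suc (Suc m))) (?x z) (iso_rep m \<alpha> \<beta>) = \<zero>) =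
          (z \<in> fvecs R m \<and> dot m z z = \<ominus> ((a \<otimes> a \<oplus> b \<otimes> b) \<oplus> c \<otimes> c) \<and> (a \<otimes> \<alpha> \<oplus> b \<otimes> \<beta>) \<oplus> c = \<zero>)"
    proof (cases "z \<in> fvecs R m")
      case True
      have zz: "dot m z z \<in> carrier R" using dot_closed[OF True True] .
      have e1: "dot (Suc (Suc (Suc m))) (?x z) (?x z) = dot m z z \<oplus> ((a \<otimes> a \<oplus> b \<otimes> b) \<oplus> c \<otimes> c)"
        using dot_upd3[OF True True a a b b c c] zz a b c by (simp add: a_assoc)
      have e2: "dot (Suc (Suc (Suc m))) (?x z) (iso_rep m \<alpha> \<beta>) = (a \<otimes> \<alpha> \<oplus> b \<otimes> \<beta>) \<oplus> c"
        unfolding iso_rep_def using dot_upd3[OF True zero_vec_fvecs a al b be c one_closed] dot_zero_vec[OF True] a b al be c by simp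
      have "(dot m z z \<oplus> ((a \<otimes> a \<oplus> b \<otimes> b) \<oplus> c \<otimes> c) = \<zero>) = (dot m z z = \<zero> \<ominus> ((a \<otimes> a \<oplus> b \<otimes> b) \<oplus> c \<otimes> c))"
        using add_eq_iff_eq_minus[OF zz, of "(a \<otimes> a \<oplus> b \<otimes> b) \<oplus> c \<otimes> c" \<zero>] a b c by simp
      also have "\<zero> \<ominus> ((a \<otimes> a \<oplus> b \<otimes> b) \<oplus> c \<otimes> c) = \<ominus> ((a \<otimes> a \<oplus> b \<otimes> b) \<oplus> c \<otimes> c)" using a b c by algebra
      finally show ?thesis using e1 e2 True by simp
    qed simp
  qed
  thus "card {z \<in> fvecs R m. dot (Suc (Suc (Suc m))) (?x z) (?x z) = \<zero> \<and> dot (Suc (Suc (Suc m))) (?x z) (iso_rep m \<alpha> \<beta>) = \<zero>} =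
        (if (a \<otimes> \<alpha> \<oplus> b \<otimes> \<beta>) \<oplus> c = \<zero> then sphere_count m (\<ominus> ((a \<otimes> a \<oplus> b \<otimes> b) \<oplus> c \<otimes> c)) else 0)"
    unfolding sphere_count_def by simp
qed

lemma null_perp_count_iso_rep:
  assumes al: "\<alpha> \<in> carrier R" and be: "\<beta> \<in> carrier R" and s1: "\<alpha> \<otimes> \<alpha> \<oplus> \<beta> \<otimes> \<beta> = \<ominus> \<one>"
  shows "real (null_perp_count (Suc (Suc (Suc (2*j+1)))) (iso_rep (2*j+1) \<alpha> \<beta>))
    = real q ^ (2*j+2) + real q * (real q - 1) * (- real q) ^ j"
proof -
  let ?m = "2*j+1"
  have b0: "\<beta> \<noteq> \<zero>" using s1 al square_ne_minus_one by auto
  define t where "t a b = \<beta> \<otimes> a \<ominus> \<alpha> \<otimes> b" for a b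
  have t: "t a b \<in> carrier R" if "a \<in> carrier R" "b \<in> carrier R" for a b
    using that al be unfolding t_def by simp
  \<comment> \<open>Lagrange's identity \<open>(a\<^sup>2 + b\<^sup>2)(\<alpha>\<^sup>2 + \<beta>\<^sup>2) = (a\<alpha> + b\<beta>)\<^sup>2 + (\<beta>a - \<alpha>b)\<^sup>2\<close> with \<open>\<alpha>\<^sup>2 + \<beta>\<^sup>2 = -1\<close>\<close>
  have lagrange: "\<ominus> ((a \<otimes> a \<oplus> b \<otimes> b) \<oplus> \<ominus> (a \<otimes> \<alpha> \<oplus> b \<otimes> \<beta>) \<otimes> \<ominus> (a \<otimes> \<alpha> \<oplus> b \<otimes> \<beta>)) = t a b \<otimes> t a b"
    if a: "a \<in> carrier R" and b: "b \<in> carrier R" for a b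
  proof -
    have "\<ominus> ((a \<otimes> a \<oplus> b \<otimes> b) \<oplus> \<ominus> (a \<otimes> \<alpha> \<oplus> b \<otimes> \<beta>) \<otimes> \<ominus> (a \<otimes> \<alpha> \<oplus> b \<otimes> \<beta>))
        = (a \<otimes> a \<oplus> b \<otimes> b) \<otimes> \<ominus> (\<one> \<oplus> (\<alpha> \<otimes> \<alpha> \<oplus> \<beta> \<otimes> \<beta>)) \<oplus> t a b \<otimes> t a b"
      unfolding t_def using a b al be by algebra
    also have "\<one> \<oplus> (\<alpha> \<otimes> \<alpha> \<oplus> \<beta> \<otimes> \<beta>) = \<zero>" using s1 by (simp add: r_neg)
    finally show ?thesis using a b t by simp
  qed
  have "null_perp_count (Suc (Suc (Suc ?m))) (iso_rep ?m \<alpha> \<beta>)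
      = (\<Sum>b\<in>carrier R. \<Sum>a\<in>carrier R. \<Sum>c\<in>carrier R.
          if (a \<otimes> \<alpha> \<oplus> b \<otimes> \<beta>) \<oplus> c = \<zero> then sphere_count ?m (\<ominus> ((a \<otimes> a \<oplus> b \<otimes> b) \<oplus> c \<otimes> c)) else 0)"
    unfolding null_perp_count_iso_rep_sum[OF al be]
    by (subst sum.swap) (intro sum.cong refl sum.swap)
  also have "\<dots> = (\<Sum>b\<in>carrier R. \<Sum>a\<in>carrier R. sphere_count ?m (t a b \<otimes> t a b))"
    using al be by (intro sum.cong refl) (simp add: sum_if_add_eq_zero lagrange)
  also have "\<dots> = (\<Sum>b\<in>carrier R. \<Sum>s\<in>carrier R. sphere_count ?m (s \<otimes> s))"
    unfolding t_def using al be b0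
    by (intro sum.cong refl sum_carrier_reindex_affine[where f="\<lambda>s. sphere_count ?m (s \<otimes> s)"]) auto
  finally have "real (null_perp_count (Suc (Suc (Suc ?m))) (iso_rep ?m \<alpha> \<beta>))
      = real q * (\<Sum>s\<in>carrier R. real (sphere_count ?m (s \<otimes> s)))"
    by simp
  also have "(\<Sum>s\<in>carrier R. real (sphere_count ?m (s \<otimes> s)))
      = real (sphere_count ?m (\<zero> \<otimes> \<zero>)) + (real q - 1) * (real q ^ (2*j) + (- real q) ^ j)"
    by (rule sum_carrier_eq_nonzero_const) (rule sphere_count_odd_square)
  also have "real (sphere_count ?m (\<zero> \<otimes> \<zero>)) = real q ^ (2*j)" using sphere_count_odd_zero[of j] by simp
  finally show ?thesis by (simp add: algebra_simps)
qed

lemma exists_sum_two_squares_snd_nonzero: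
  assumes e: "e \<in> carrier R" "e \<noteq> \<zero>"
  obtains \<alpha> \<beta> where "\<alpha> \<in> carrier R" "\<beta> \<in> carrier R" "\<beta> \<noteq> \<zero>" "\<alpha> \<otimes> \<alpha> \<oplus> \<beta> \<otimes> \<beta> = e"
proof -
  obtain a b where ab: "a \<in> carrier R" "b \<in> carrier R" "a \<otimes> a \<oplus> b \<otimes> b = e"
    using exists_sum_two_squares[OF e(1)] by blast
  show thesis
  proof (cases "b = \<zero>")
    case True
    then have "a \<noteq> \<zero>" using ab e by auto
    moreover have "b \<otimes> b \<oplus> a \<otimes> a = e" using ab by (simp add: a_comm)
    ultimately show thesis using that ab by blast
  next
    case False
    then show thesis using that ab by blast
  qed
qed

lemma null_perp_count_le:
  assumes k: "k > 0" and v: "v \<in> fvecs R (4*k+2)" and i: "i < 4*k+2" and vi: "v i \<noteq> \<zero>"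
  shows "real (null_perp_count (4*k+2) v) \<le> real q ^ (4*k)"
proof -
  \<comment> \<open>\<open>d = 2j + 4\<close> with \<open>j\<close> odd: this parity is where \<open>d \<equiv> 2 (mod 4)\<close> enters.\<close>
  define j where "j = 2*k - 1"
  have d2: "Suc (Suc (2*j+2)) = 4*k+2" and d3: "Suc (Suc (Suc (2*j+1))) = 4*k+2" and jj: "2*j+2 = 4*k"
    using k j_def by auto
  show ?thesis
  proof (cases "dot (4*k+2) v v = \<zero>")
    case False
    obtain \<alpha> \<beta> where al: "\<alpha> \<in> carrier R" and be: "\<beta> \<in> carrier R" and b0: "\<beta> \<noteq> \<zero>"
      and s: "\<alpha> \<otimes> \<alpha> \<oplus> \<beta> \<otimes> \<beta> = dot (4*k+2) v v"
      using exists_sum_two_squares_snd_nonzero[OF dot_closed[OF v v] False] by blast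
    have "aniso_rep (2*j+2) \<alpha> \<beta> \<in> fvecs R (4*k+2)" using aniso_rep_fvecs[OF al be, of "2*j+2"] d2 by simp
    moreover have "dot (4*k+2) (aniso_rep (2*j+2) \<alpha> \<beta>) (aniso_rep (2*j+2) \<alpha> \<beta>) = dot (4*k+2) v v"
      using dot_aniso_rep[OF al be, of "2*j+2"] d2 s by simp
    ultimately have "null_perp_count (4*k+2) v = null_perp_count (4*k+2) (aniso_rep (2*j+2) \<alpha> \<beta>)"
      using null_perp_count_eq_anisotropic[OF v _ _ False] by simp
    also have "real \<dots> = real q ^ (2*j+2)"
      unfolding d2[symmetric] by (rule null_perp_count_aniso_rep[OF al be b0])
    finally show ?thesis unfolding jj by simp
  next
    case True
    obtain \<alpha> \<beta> where al: "\<alpha> \<in> carrier R" and be: "\<beta> \<in> carrier R" and s: "\<alpha> \<otimes> \<alpha> \<oplus> \<beta> \<otimes> \<beta> = \<ominus> \<one>"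
      using exists_sum_two_squares[of "\<ominus> \<one>"] by auto
    let ?w = "iso_rep (2*j+1) \<alpha> \<beta>"
    have "?w \<in> fvecs R (4*k+2)" using iso_rep_fvecs[OF al be, of "2*j+1"] d3 by simp
    moreover have "dot (4*k+2) ?w ?w = \<zero>" using dot_iso_rep[OF al be, of "2*j+1"] d3 s by (simp add: l_neg)
    moreover have "?w (4*k+2 - 1) = \<one>" using iso_rep_last[of "2*j+1" \<alpha> \<beta>] d3 by simp
    ultimately have "null_perp_count (4*k+2) v = null_perp_count (4*k+2) ?w"
      using null_perp_count_eq_isotropic[OF v _ True _ i vi] by simp
    also have "real \<dots> = real q ^ (2*j+2) + real q * (real q - 1) * (- real q) ^ j"
      unfolding d3[symmetric] by (rule null_perp_count_iso_rep[OF al be s])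
    also have "(- real q) ^ j = - (real q ^ j)" using k j_def by simp
    finally have "real (null_perp_count (4*k+2) v) = real q ^ (2*j+2) - real q * (real q - 1) * real q ^ j"
      by simp
    moreover have "0 \<le> real q * (real q - 1) * real q ^ j" using q_ge_3 by simp
    ultimately show ?thesis by (simp only: jj)
  qed
qed

lemma zero_sphere_eq: "zero_sphere R d = {x \<in> fvecs R d. dot d x x = \<zero>}"
  unfolding zero_sphere_def dot_def ..

lemma finite_zero_sphere: "finite (zero_sphere R d)"
  unfolding zero_sphere_eq using finite_fvecs by simp

lemma card_zero_sphere:
  "real (card (zero_sphere R (4*k+2))) = real q ^ (4*k+1) - (real q - 1) * real q ^ (2*k)"
proof -
  have "real (sphere_count (2*(2*k)+2) \<zero>) = real q ^ (2*(2*k)+1) + (- real q) ^ (2*k) * (1 - real q)"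
    using sphere_count_even[of \<zero> "2*k"] by simp
  moreover have "(- real q) ^ (2*k) = real q ^ (2*k)" by (simp add: power_mult)
  moreover have "2*(2*k)+2 = 4*k+2" "2*(2*k)+1 = 4*k+1" by auto
  ultimately show ?thesis unfolding sphere_count_def zero_sphere_eq by (simp add: algebra_simps)
qed

lemma card_zero_sphere_dot_eq_le:
  assumes k: "k > 0" and y: "y \<in> fvecs R (4*k+2)" and y': "y' \<in> fvecs R (4*k+2)" and ne: "y \<noteq> y'"
  shows "real (card {x \<in> zero_sphere R (4*k+2). dot (4*k+2) x y = dot (4*k+2) x y'}) \<le> real q ^ (4*k)"
proof -
  let ?d = "4*k+2"
  have m1: "\<ominus> \<one> \<in> carrier R" by simp
  define w where "w = vadd_smult ?d y (\<ominus> \<one>) y'"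
  have wV: "w \<in> fvecs R ?d" unfolding w_def using vadd_smult_fvecs[OF y y' m1] .
  obtain i where i: "i < ?d" and yi: "y i \<noteq> y' i" using fvecs_eqI[OF y y'] ne by auto
  have yc: "y i \<in> carrier R" "y' i \<in> carrier R" using y y' i fvecs_carrier by auto
  have dot_w: "dot ?d x w = dot ?d x y \<ominus> dot ?d x y'" if x: "x \<in> fvecs R ?d" for x
    unfolding w_def using dot_vadd_smult_right[OF y y' x m1] dot_closed[OF x y] dot_closed[OF x y']
    by (simp add: a_minus_def l_minus)
  have "w i = y i \<ominus> y' i" unfolding w_def using vadd_smult_apply[OF i] yc by (simp add: a_minus_def l_minus)
  then have wi: "w i \<noteq> \<zero>" using yi yc r_right_minus_eq by simp
  have "{x \<in> zero_sphere R ?d. dot ?d x y = dot ?d x y'} = {x \<in> fvecs R ?d. dot ?d x x = \<zero> \<and> dot ?d x w = \<zero>}"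
    unfolding zero_sphere_eq using dot_w dot_closed[OF _ y] dot_closed[OF _ y'] r_right_minus_eq by auto
  then show ?thesis using null_perp_count_le[OF k wV i wi] unfolding null_perp_count_def by simp
qed

definition dot_energy :: "nat \<Rightarrow> (nat \<Rightarrow> 'a) set \<Rightarrow> (nat \<Rightarrow> 'a) \<Rightarrow> real" where
  "dot_energy n A x = (\<Sum>y\<in>A. \<Sum>y'\<in>A. if dot n x y = dot n x y' then 1 else 0)"

lemma card_squared_le_card_dot_image_mult_energy:
  "finite A \<Longrightarrow> real (card A)^2 \<le> real (card ((\<lambda>y. dot n x y) ` A)) * dot_energy n A x"
  unfolding dot_energy_def by (rule card_squared_le_card_image_mult_collisions)

lemma card_squared_le_q_mult_dot_energy:
  assumes A: "A \<subseteq> fvecs R n" "finite A" and x: "x \<in> fvecs R n"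
  shows "real (card A)^2 \<le> real q * dot_energy n A x"
proof -
  have "card ((\<lambda>y. dot n x y) ` A) \<le> q"
    using A x dot_closed fin by (intro card_mono) auto
  moreover have "0 \<le> dot_energy n A x" unfolding dot_energy_def by (intro sum_nonneg) auto
  ultimately show ?thesis
    using card_squared_le_card_dot_image_mult_energy[OF A(2), of n x]
    by (meson mult_right_mono of_nat_le_iff order_trans)
qed

lemma sum_dot_energy_zero_sphere_le:
  assumes k: "k > 0" and A: "A \<subseteq> zero_sphere R (4*k+2)"
  defines "S \<equiv> zero_sphere R (4*k+2)"
  shows "(\<Sum>x\<in>S. dot_energy (4*k+2) A x) \<le> real (card A) * real (card S) + real (card A)^2 * real q ^ (4*k)"
proof -
  let ?d = "4*k+2"
  have fS: "finite S" unfolding S_def by (rule finite_zero_sphere)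
  have fA: "finite A" using A fS finite_subset S_def by blast
  have card_filter: "real (card {x \<in> S. P x}) = (\<Sum>x\<in>S. if P x then 1 else 0)" for P
    using fS by (simp add: sum.inter_filter[symmetric])
  have "(\<Sum>x\<in>S. dot_energy ?d A x) = (\<Sum>y\<in>A. \<Sum>y'\<in>A. \<Sum>x\<in>S. if dot ?d x y = dot ?d x y' then 1 else 0)"
    unfolding dot_energy_def by (simp add: sum.swap[of _ S])
  also have "\<dots> = (\<Sum>y\<in>A. \<Sum>y'\<in>A. real (card {x \<in> S. dot ?d x y = dot ?d x y'}))"
    by (simp only: card_filter)
  also have "\<dots> \<le> (\<Sum>y\<in>A. \<Sum>y'\<in>A. (if y = y' then real (card S) else 0) + real q ^ (4*k))"
  proof (intro sum_mono)
    fix y y' assume "y \<in> A" "y' \<in> A"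
    then have "y \<in> fvecs R ?d" "y' \<in> fvecs R ?d" using A unfolding zero_sphere_eq by auto
    then show "real (card {x \<in> S. dot ?d x y = dot ?d x y'}) \<le> (if y = y' then real (card S) else 0) + real q ^ (4*k)"
      using card_zero_sphere_dot_eq_le[OF k] unfolding S_def by (cases "y = y'") auto
  qed
  also have "\<dots> = real (card A) * real (card S) + real (card A)^2 * real q ^ (4*k)"
    using fA by (simp add: sum.distrib sum.delta power2_eq_square algebra_simps)
  finally show ?thesis .
qed

lemma sum_dot_energy_le:
  assumes k: "k > 0" and A: "A \<subseteq> zero_sphere R (4*k+2)" and big: "real (card A) \<ge> real q ^ (2*k+1)"
  shows "(\<Sum>x\<in>A. dot_energy (4*k+2) A x) \<le> 3 * real (card A)^3 / real q"
proof -
  define S where "S = zero_sphere R (4*k+2)"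
  define a where "a = real (card A)"
  define Q where "Q = real q"
  have Q3: "Q \<ge> 3" using q_ge_3 Q_def by simp
  have fS: "finite S" unfolding S_def by (rule finite_zero_sphere)
  have AS: "A \<subseteq> S" using A S_def by simp
  have SV: "S \<subseteq> fvecs R (4*k+2)" unfolding S_def zero_sphere_eq by auto
  have fA: "finite A" using AS fS finite_subset by blast
  have "(\<Sum>x\<in>A. dot_energy (4*k+2) A x - a^2 / Q) \<le> (\<Sum>x\<in>S. dot_energy (4*k+2) A x - a^2 / Q)"
  proof (rule sum_mono2[OF fS AS])
    fix x assume "x \<in> S - A"
    then have "a^2 \<le> Q * dot_energy (4*k+2) A x"
      using card_squared_le_q_mult_dot_energy[OF _ fA, of "4*k+2" x] AS SV unfolding a_def Q_def by auto
    then show "0 \<le> dot_energy (4*k+2) A x - a^2 / Q" using Q3 by (simp add: field_simps)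
  qed
  also have "\<dots> \<le> a * real (card S) + a^2 * Q ^ (4*k) - real (card S) * a^2 / Q"
    using sum_dot_energy_zero_sphere_le[OF k A] unfolding S_def a_def Q_def by (simp add: sum_subtractf)
  finally have "(\<Sum>x\<in>A. dot_energy (4*k+2) A x)
      \<le> a * (a^2 / Q) + (a * real (card S) + a^2 * (Q ^ (4*k) - real (card S) / Q))"
    by (simp add: sum_subtractf a_def algebra_simps)
  also have "a * real (card S) + a^2 * (Q ^ (4*k) - real (card S) / Q) \<le> 2 * a^3 / Q"
    using card_zero_sphere[of k] big Q3 unfolding S_def a_def Q_def by (intro energy_terms_le) auto
  also have "a * (a^2 / Q) = a^3 / Q" by (simp add: power2_eq_square power3_eq_cube)
  finally show ?thesis unfolding a_def Q_def by simp
qed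

lemma exists_many_dot_values:
  assumes k: "k > 0" and A: "A \<subseteq> zero_sphere R (4*k+2)" and big: "real (card A) \<ge> real q ^ (2*k+1)"
  shows "\<exists>x\<in>A. real q \<le> 3 * real (card ((\<lambda>y. dot (4*k+2) x y) ` A))"
proof -
  define a where "a = real (card A)"
  have fA: "finite A" using finite_subset[OF A finite_zero_sphere] .
  have "real q ^ (2*k+1) > 0" using q_ge_3 by simp
  then have a_pos: "a > 0" using big a_def by linarith
  obtain x where x: "x \<in> A" and small: "dot_energy (4*k+2) A x \<le> 3 * a^2 / real q"
  proof (rule ccontr)
    assume "\<not> thesis"
    then have "\<And>x. x \<in> A \<Longrightarrow> 3 * a^2 / real q < dot_energy (4*k+2) A x" using that by force
    moreover have "A \<noteq> {}" using a_pos a_def by auto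
    ultimately have "(\<Sum>x\<in>A. 3 * a^2 / real q) < (\<Sum>x\<in>A. dot_energy (4*k+2) A x)"
      using fA by (intro sum_strict_mono) auto
    moreover have "(\<Sum>x\<in>A. 3 * a^2 / real q) = 3 * a^3 / real q"
      by (simp add: a_def power2_eq_square power3_eq_cube field_simps)
    ultimately show False
      using sum_dot_energy_le[OF k A big] unfolding a_def by linarith
  qed
  have "a^2 \<le> real (card ((\<lambda>y. dot (4*k+2) x y) ` A)) * (3 * a^2 / real q)"
    using card_squared_le_card_dot_image_mult_energy[OF fA, of "4*k+2" x] small
    unfolding a_def by (meson mult_left_mono of_nat_0_le_iff order_trans)
  then have "real q \<le> 3 * real (card ((\<lambda>y. dot (4*k+2) x y) ` A))"
    using a_pos q_ge_3 by (simp add: field_simps power2_eq_square)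
  then show ?thesis using x by blast
qed

lemma fsqdist_zero_sphere:
  assumes x: "x \<in> zero_sphere R d" and y: "y \<in> zero_sphere R d"
  shows "fsqdist R d x y = \<ominus> ((\<one> \<oplus> \<one>) \<otimes> dot d x y)"
proof -
  have xV: "x \<in> fvecs R d" and yV: "y \<in> fvecs R d" and Qx: "dot d x x = \<zero>" and Qy: "dot d y y = \<zero>"
    using x y unfolding zero_sphere_eq by auto
  have m1: "\<ominus> \<one> \<in> carrier R" by simp
  have "fsqdist R d x y = dot d (vadd_smult d x (\<ominus> \<one>) y) (vadd_smult d x (\<ominus> \<one>) y)"
    unfolding fsqdist_def dot_def
  proof (intro finsum_cong')
    fix i assume "i \<in> {..<d}"
    then have i: "i < d" by simp
    have "x i \<in> carrier R" "y i \<in> carrier R" using xV yV i fvecs_carrier by auto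
    then have "vadd_smult d x (\<ominus> \<one>) y i = x i \<ominus> y i"
      using vadd_smult_apply[OF i] by (simp add: a_minus_def l_minus)
    then show "(x i \<ominus> y i) \<otimes> (x i \<ominus> y i) = vadd_smult d x (\<ominus> \<one>) y i \<otimes> vadd_smult d x (\<ominus> \<one>) y i"
      by simp
  qed (use vadd_smult_fvecs[OF xV yV m1] fvecs_carrier in auto)
  also have "\<dots> = dot d x x \<oplus> (\<one> \<oplus> \<one>) \<otimes> \<ominus> \<one> \<otimes> dot d x y \<oplus> \<ominus> \<one> \<otimes> \<ominus> \<one> \<otimes> dot d y y"
    by (rule dot_vadd_smult_self[OF xV yV m1])
  also have "\<dots> = \<ominus> ((\<one> \<oplus> \<one>) \<otimes> dot d x y)" unfolding Qx Qy using dot_closed[OF xV yV] by algebra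
  finally show ?thesis .
qed

lemma fsqdist_closed: "x \<in> fvecs R d \<Longrightarrow> y \<in> fvecs R d \<Longrightarrow> fsqdist R d x y \<in> carrier R"
  unfolding fsqdist_def by (intro finsum_closed) (auto simp: fvecs_carrier)

lemma card_dot_image_le_card_dist_set:
  assumes A: "A \<subseteq> zero_sphere R d" and x: "x \<in> A"
  shows "card ((\<lambda>y. dot d x y) ` A) \<le> card (dist_set R d A)"
proof -
  have AV: "A \<subseteq> fvecs R d" using A unfolding zero_sphere_eq by auto
  let ?g = "\<lambda>t. \<ominus> ((\<one> \<oplus> \<one>) \<otimes> t)"
  have "inj_on ?g (carrier R)"
    by (rule inj_onI) (metis add.inv_inv m_closed one_closed add.m_closed m_lcancel two_nonzero)
  moreover have dots: "(\<lambda>y. dot d x y) ` A \<subseteq> carrier R"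
    using AV x by (blast intro: dot_closed)
  ultimately have "card ((\<lambda>y. dot d x y) ` A) = card (?g ` (\<lambda>y. dot d x y) ` A)"
    by (metis card_image inj_on_subset)
  also have "?g ` (\<lambda>y. dot d x y) ` A = (\<lambda>y. fsqdist R d x y) ` A"
    unfolding image_image by (rule image_cong) (simp_all add: fsqdist_zero_sphere subsetD[OF A] x)
  also have "card \<dots> \<le> card (dist_set R d A)"
  proof (rule card_mono)
    show "(\<lambda>y. fsqdist R d x y) ` A \<subseteq> dist_set R d A" unfolding dist_set_def using x by blast
    have "dist_set R d A \<subseteq> carrier R"
      unfolding dist_set_def using AV by (auto intro: fsqdist_closed)
    then show "finite (dist_set R d A)" using fin finite_subset by blast
  qed
  finally show ?thesis .
qed

lemma card_dist_set_ge:
  assumes k: "k > 0" and A: "A \<subseteq> zero_sphere R (4*k+2)" and big: "real q ^ (2*k+1) \<le> real (card A)"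
  shows "real q \<le> 3 * real (card (dist_set R (4*k+2) A))"
proof -
  obtain x where "x \<in> A" and "real q \<le> 3 * real (card ((\<lambda>y. dot (4*k+2) x y) ` A))"
    using exists_many_dot_values[OF k A big] by blast
  moreover from this(1) have "card ((\<lambda>y. dot (4*k+2) x y) ` A) \<le> card (dist_set R (4*k+2) A)"
    by (rule card_dot_image_le_card_dist_set[OF A])
  ultimately show ?thesis by linarith
qed

end

theorem corollary1p22:
  shows "\<forall>k::nat. k > 0 \<longrightarrow>
    (\<exists>C::real. \<exists>c::real. C > 0 \<and> c > 0 \<and>
      (\<forall>(R::'a ring) (A::(nat \<Rightarrow> 'a) set).
         field R \<and> finite (carrier R) \<and>
         (\<exists>p n::nat. Factorial_Ring.prime p \<and> odd p \<and> n > 0 \<and> card (carrier R) = p ^ n) \<and>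
         card (carrier R) mod 4 = 3 \<and>
         A \<subseteq> zero_sphere R (4 * k + 2) \<and>
         real (card A) \<ge> C * real (card (carrier R)) ^ (2 * k + 1)
         \<longrightarrow> real (card (dist_set R (4 * k + 2) A)) \<ge> c * real (card (carrier R))))"
proof -
  have main: "1/3 * real (card (carrier R)) \<le> real (card (dist_set R (4 * k + 2) A))"
    if "k > 0" "field R" "finite (carrier R)" "card (carrier R) mod 4 = 3"
      "A \<subseteq> zero_sphere R (4 * k + 2)" "1 * real (card (carrier R)) ^ (2 * k + 1) \<le> real (card A)"
    for k and R :: "'a ring" and A
  proof -
    interpret field_3_mod_4 R
      using that by (simp add: field_3_mod_4_def field_3_mod_4_axioms_def)
    show ?thesis using card_dist_set_ge[OF that(1,5)] that(6) by simp
  qed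
  show ?thesis
    by (intro allI impI, rule exI[of _ "1::real"], rule exI[of _ "1/3::real"], intro conjI allI impI)
      (simp, simp, elim conjE, (rule main; assumption))
qed

end
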